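(* Let $\mathcal{A}=M_n(\mathbb{C}[x_1,\dots,x_d])$ be the $*$-algebra of $n\times n$ matrices with polynomial entries, and for $k\in\mathbb{N}$ let $\mathcal{A}_k=\mathrm{Lin}\{x^\alpha e_{ij}:|\alpha|\le k,\ i,j=1,\dots,n\}$. Let $m\in\mathbb{N}$, $\mathcal{B}=\mathcal{A}_m$, $\mathcal{C}=\mathcal{A}_{m+1}$, and let $L$ be a positive linear functional on $\mathcal{C}^2=\mathcal{A}_{2m+2}$ which is a flat extension with respect to $\mathcal{B}$. Then there exist $r\in\mathbb{N}$, points $t_1,\dots,t_r\in\mathbb{R}^d$ and vectors $u_i=(u_{1i},\dots,u_{ni})\in\mathbb{C}^n$, $i=1,\dots,r$, such that $$L((p_{jk}))=\sum_{j,k=1}^n\sum_{i=1}^r p_{jk}(t_i)\,u_{ki}\,\overline{u_{ji}}\quad\text{for all }(p_{jk})\in\mathcal{A}_{2m+2}.$$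
   Context: The involution on $\mathcal{A}$ is conjugate transpose, with the variables $x_l$ hermitian (polynomial coefficients conjugated); $e_{ij}$ are the matrix units, $e_{ij}^*=e_{ji}$, and $x^\alpha e_{ij}$ is the matrix with entry $x^\alpha$ in position $(i,j)$ and $0$ elsewhere. For a $*$-invariant subspace $\mathcal{C}\ni1$, $\mathcal{C}^2:=\mathrm{Lin}\{ab:a,b\in\mathcal{C}\}$. A linear functional $L$ on $\mathcal{C}^2$ is positive if $L(a^*a)\ge0$ for $a\in\mathcal{C}$; $K_L(\mathcal{C}):=\{a\in\mathcal{C}:L(b^*a)=0\ \forall b\in\mathcal{C}\}$; $L$ is a flat extension with respect to $\mathcal{B}\subseteq\mathcal{C}$ if $\mathcal{C}=\mathcal{B}+K_L(\mathcal{C})$. *)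

theory Defs
  imports Complex_Main
begin

text \<open>Elements of M_n(C[x_1..x_d]) are encoded by coefficient functions:
  p alpha i j = coefficient of x^alpha in the (i,j) entry (indices i,j < n, variables l < d,
  multi-indices alpha :: nat => nat supported in {..<d}).\<close>

type_synonym mpmat = "(nat \<Rightarrow> nat) \<Rightarrow> nat \<Rightarrow> nat \<Rightarrow> complex"

definition multi_idx :: "nat \<Rightarrow> nat \<Rightarrow> (nat \<Rightarrow> nat) set" where
  "multi_idx d k = {\<alpha>. (\<forall>l. d \<le> l \<longrightarrow> \<alpha> l = 0) \<and> (\<Sum>l<d. \<alpha> l) \<le> k}"

definition Ak :: "nat \<Rightarrow> nat \<Rightarrow> nat \<Rightarrow> mpmat set" where
  "Ak n d k = {p. \<forall>\<alpha> i j. p \<alpha> i j \<noteq> 0 \<longrightarrow> \<alpha> \<in> multi_idx d k \<and> i < n \<and> j < n}"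

definition mpmult :: "nat \<Rightarrow> mpmat \<Rightarrow> mpmat \<Rightarrow> mpmat" where
  "mpmult n p q = (\<lambda>\<alpha> i j. \<Sum>l<n. \<Sum>\<beta>\<in>{\<beta>. \<forall>x. \<beta> x \<le> \<alpha> x}.
       p \<beta> i l * q (\<lambda>x. \<alpha> x - \<beta> x) l j)"

text \<open>Involution: conjugate transpose, variables hermitian.\<close>
definition mpstar :: "mpmat \<Rightarrow> mpmat" where
  "mpstar p = (\<lambda>\<alpha> i j. cnj (p \<alpha> j i))"

definition mpadd :: "mpmat \<Rightarrow> mpmat \<Rightarrow> mpmat" where
  "mpadd p q = (\<lambda>\<alpha> i j. p \<alpha> i j + q \<alpha> i j)"

definition mpscale :: "complex \<Rightarrow> mpmat \<Rightarrow> mpmat" where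
  "mpscale c p = (\<lambda>\<alpha> i j. c * p \<alpha> i j)"

definition lin_on :: "mpmat set \<Rightarrow> (mpmat \<Rightarrow> complex) \<Rightarrow> bool" where
  "lin_on V L \<longleftrightarrow> (\<forall>a\<in>V. \<forall>b\<in>V. L (mpadd a b) = L a + L b) \<and>
                   (\<forall>c. \<forall>a\<in>V. L (mpscale c a) = c * L a)"

definition positive_on :: "nat \<Rightarrow> mpmat set \<Rightarrow> (mpmat \<Rightarrow> complex) \<Rightarrow> bool" where
  "positive_on n C L \<longleftrightarrow> (\<forall>a\<in>C. Im (L (mpmult n (mpstar a) a)) = 0 \<and>
                                    Re (L (mpmult n (mpstar a) a)) \<ge> 0)"

definition kernelL :: "nat \<Rightarrow> mpmat set \<Rightarrow> (mpmat \<Rightarrow> complex) \<Rightarrow> mpmat set" where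
  "kernelL n C L = {a\<in>C. \<forall>b\<in>C. L (mpmult n (mpstar b) a) = 0}"

definition flat_ext :: "nat \<Rightarrow> mpmat set \<Rightarrow> mpmat set \<Rightarrow> (mpmat \<Rightarrow> complex) \<Rightarrow> bool" where
  "flat_ext n B C L \<longleftrightarrow> (\<forall>c\<in>C. \<exists>b\<in>B. \<exists>k\<in>kernelL n C L. c = mpadd b k)"

definition mpeval :: "nat \<Rightarrow> nat \<Rightarrow> mpmat \<Rightarrow> nat \<Rightarrow> nat \<Rightarrow> (nat \<Rightarrow> real) \<Rightarrow> complex" where
  "mpeval d k p i j t = (\<Sum>\<alpha>\<in>multi_idx d k. p \<alpha> i j * (\<Prod>l<d. complex_of_real (t l) ^ \<alpha> l))"

end

theory Submission
  imports Defs "HOL-Library.Function_Algebras" "HOL-Library.FuncSet" "HOL-Computational_Algebra.Fundamental_Theorem_Algebra"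
begin

text \<open>The form \<open>\<langle>a, b\<rangle> = L(b\<^sup>* a)\<close> is positive semidefinite on \<open>\<C> = \<A>\<^sub>m\<^sub>+\<^sub>1\<close>, and flatness
  says every element of \<open>\<C>\<close> agrees with one of \<open>\<B> = \<A>\<^sub>m\<close> modulo the null space of the form.
  Reducing \<open>x\<^sub>l b\<close> (\<open>b \<in> \<B>\<close>) back into \<open>\<B>\<close> modulo null vectors yields commuting operators
  \<open>T\<^sub>l\<close> on \<open>\<B>\<close> that are symmetric for the form. A finite-dimensional family of commuting
  symmetric operators has an orthonormal basis of joint eigenvectors \<open>e\<^sub>i\<close> modulo null vectors,
  with real eigenvalues \<open>t\<^sub>i \<in> \<real>\<^sup>d\<close>. On \<open>e\<^sub>i\<close> every monomial of degree \<open>\<le> m + 1\<close> acts as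
  evaluation at \<open>t\<^sub>i\<close>, and writing \<open>x\<^sup>\<alpha> e\<^sub>j\<^sub>k = (x\<^sup>\<beta> e\<^sub>0\<^sub>j)\<^sup>* (x\<^sup>\<gamma> e\<^sub>0\<^sub>k)\<close> with \<open>|\<beta>|, |\<gamma>| \<le> m + 1\<close>
  and expanding in the basis gives \<open>L\<close> as the sum of point evaluations at the \<open>t\<^sub>i\<close> with
  weight vectors \<open>u\<^sub>k\<^sub>i = \<langle>e\<^sub>0\<^sub>k, e\<^sub>i\<rangle>\<close>.\<close>

lemma exists_Suc_transition:
  assumes "P 0" "\<not> P D"
  shows "\<exists>i<D. P i \<and> \<not> P (Suc i)"
  using assms by (induction D) (auto simp: less_Suc_eq)

section \<open>Commuting symmetric operators for a semidefinite form\<close>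

locale commuting_symmetric_operators = vector_space scale
  for scale :: "complex \<Rightarrow> 'v::ab_group_add \<Rightarrow> 'v" (infixr \<open>*s\<close> 75) +
  fixes V F :: "'v set" and h :: "'v \<Rightarrow> 'v \<Rightarrow> complex" and T :: "nat \<Rightarrow> 'v \<Rightarrow> 'v" and d :: nat
  assumes V_subspace: "subspace V" and finite_F: "finite F" and V_span: "V \<subseteq> span F"
    and form_add_left: "a \<in> V \<Longrightarrow> b \<in> V \<Longrightarrow> c \<in> V \<Longrightarrow> h (a + b) c = h a c + h b c"
    and form_scale_left: "a \<in> V \<Longrightarrow> c \<in> V \<Longrightarrow> h (s *s a) c = s * h a c"
    and form_hermitian: "a \<in> V \<Longrightarrow> b \<in> V \<Longrightarrow> h a b = cnj (h b a)"
    and form_nonneg: "a \<in> V \<Longrightarrow> 0 \<le> Re (h a a)"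
    and T_add: "T l (a + b) = T l a + T l b"
    and T_scale: "T l (s *s a) = s *s T l a"
    and T_V: "l < d \<Longrightarrow> a \<in> V \<Longrightarrow> T l a \<in> V"
    and T_symmetric: "l < d \<Longrightarrow> a \<in> V \<Longrightarrow> b \<in> V \<Longrightarrow> h (T l a) b = h a (T l b)"
    and T_commute: "l < d \<Longrightarrow> k < d \<Longrightarrow> a \<in> V \<Longrightarrow> b \<in> V \<Longrightarrow> h (T l (T k a)) b = h (T k (T l a)) b"
begin

lemma V_zero: "0 \<in> V" using V_subspace subspace_0 by blast
lemma V_add: "a \<in> V \<Longrightarrow> b \<in> V \<Longrightarrow> a + b \<in> V" using V_subspace subspace_add by blast
lemma V_scale: "a \<in> V \<Longrightarrow> s *s a \<in> V" using V_subspace subspace_scale by blast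
lemma V_diff: "a \<in> V \<Longrightarrow> b \<in> V \<Longrightarrow> a - b \<in> V" using V_subspace subspace_diff by blast
lemma V_sum: "(\<And>i. i \<in> I \<Longrightarrow> f i \<in> V) \<Longrightarrow> sum f I \<in> V" using V_subspace subspace_sum by blast

lemma form_zero_left: "c \<in> V \<Longrightarrow> h 0 c = 0"
  using form_add_left[OF V_zero V_zero, of c] by simp
lemma form_zero_right: "c \<in> V \<Longrightarrow> h c 0 = 0"
  using form_hermitian[OF V_zero, of c] form_zero_left by simp
lemma form_add_right: "a \<in> V \<Longrightarrow> b \<in> V \<Longrightarrow> c \<in> V \<Longrightarrow> h c (a + b) = h c a + h c b"
  by (metis V_add complex_cnj_add form_add_left form_hermitian)
lemma form_scale_right: "a \<in> V \<Longrightarrow> c \<in> V \<Longrightarrow> h c (s *s a) = cnj s * h c a"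
  by (metis V_scale complex_cnj_mult form_scale_left form_hermitian)
lemma form_uminus_left: "a \<in> V \<Longrightarrow> c \<in> V \<Longrightarrow> h (- a) c = - h a c"
  using form_scale_left[of a c "-1"] by simp
lemma form_diff_left: "a \<in> V \<Longrightarrow> b \<in> V \<Longrightarrow> c \<in> V \<Longrightarrow> h (a - b) c = h a c - h b c"
  by (metis V_subspace diff_conv_add_uminus form_add_left form_uminus_left subspace_neg)
lemma form_sum_left: "(\<And>i. i \<in> I \<Longrightarrow> f i \<in> V) \<Longrightarrow> c \<in> V \<Longrightarrow> h (sum f I) c = (\<Sum>i\<in>I. h (f i) c)"
proof (induction I rule: infinite_finite_induct)
  case (infinite A) then show ?case by (simp add: form_zero_left)
next
  case empty then show ?case by (simp add: form_zero_left)
next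
  case (insert x F) then show ?case by (simp add: form_add_left V_sum)
qed
lemma form_sum_right: "(\<And>i. i \<in> I \<Longrightarrow> f i \<in> V) \<Longrightarrow> c \<in> V \<Longrightarrow> h c (sum f I) = (\<Sum>i\<in>I. h c (f i))"
proof (induction I rule: infinite_finite_induct)
  case (infinite A) then show ?case by (simp add: form_zero_right)
next
  case empty then show ?case by (simp add: form_zero_right)
next
  case (insert x F) then show ?case by (simp add: form_add_right V_sum)
qed
lemma form_self_real: "a \<in> V \<Longrightarrow> Im (h a a) = 0"
  using form_hermitian[of a a] by (metis cnj.simps(2) neg_equal_zero)

lemma T_zero: "T l 0 = 0"
  using T_add[of l 0 0] by simp
lemma T_sum: "T l (sum f I) = (\<Sum>i\<in>I. T l (f i))"
  by (induction I rule: infinite_finite_induct) (auto simp: T_zero T_add)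

text \<open>Cauchy--Schwarz in disguise: if \<open>h a a = 0\<close> but \<open>h a b \<noteq> 0\<close>, the vector
  \<open>a - t h(a,b) b\<close> has negative square for small \<open>t > 0\<close>.\<close>

lemma form_null_orthogonal:
  assumes a: "a \<in> V" and b: "b \<in> V" and aa: "h a a = 0"
  shows "h a b = 0"
proof (rule ccontr)
  assume nz: "h a b \<noteq> 0"
  define c where "c = h a b"
  define R where "R = Re (h b b)"
  have R0: "R \<ge> 0" using form_nonneg[OF b] R_def by simp
  define t :: real where "t = 1 / (R + 1)"
  have t0: "t > 0" using R0 t_def by simp
  define lam where "lam = - (of_real t * c)"
  have x: "a + lam *s b \<in> V" using a b V_add V_scale by blast
  have "h (a + lam *s b) (a + lam *s b) = h a a + lam * h b a + cnj lam * h a b + lam * cnj lam * h b b"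
  proof -
    have lb: "lam *s b \<in> V" using b V_scale by blast
    have "h (a + lam *s b) (a + lam *s b) = h a (a + lam *s b) + h (lam *s b) (a + lam *s b)"
      using form_add_left[OF a lb x] .
    also have "\<dots> = (h a a + h a (lam *s b)) + (h (lam *s b) a + h (lam *s b) (lam *s b))"
      using form_add_right[OF a lb a] form_add_right[OF a lb lb] by simp
    also have "\<dots> = (h a a + cnj lam * h a b) + (lam * h b a + lam * (cnj lam * h b b))"
      using form_scale_right[OF b a] form_scale_left[OF b a] form_scale_left[OF b lb] form_scale_right[OF b b] by simp
    finally show ?thesis by (simp add: algebra_simps)
  qed
  also have "\<dots> = - of_real t * c * cnj c - of_real t * cnj c * c + of_real (t*t) * c * cnj c * h b b"
    using form_hermitian[OF b a] aa by (simp add: lam_def c_def algebra_simps)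
  also have "\<dots> = of_real ((cmod c)^2 * (t * t * R - 2 * t))"
  proof -
    have hb: "h b b = of_real R" using form_self_real[OF b] R_def by (simp add: complex_eq_iff)
    have cc: "c * cnj c = of_real ((cmod c)^2)" using complex_norm_square[of c] by simp
    have "- of_real t * c * cnj c - of_real t * cnj c * c + of_real (t*t) * c * cnj c * h b b
        = of_real t * (- 2 * (c * cnj c)) + of_real (t*t) * (c*cnj c) * of_real R"
      unfolding hb by (simp add: algebra_simps)
    also have "\<dots> = of_real (t * (- 2 * (cmod c)^2) + (t*t) * (cmod c)^2 * R)"
      unfolding cc by simp
    finally show ?thesis by (simp add: algebra_simps)
  qed
  finally have eq: "Re (h (a + lam *s b) (a + lam *s b)) = (cmod c)^2 * (t * t * R - 2 * t)"
    by simp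
  have "t * R < 1" using R0 unfolding t_def by (simp add: field_simps)
  then have "t * (t * R - 2) < 0" using t0 by (intro mult_pos_neg) auto
  then have "t * t * R - 2 * t < 0" by (simp add: algebra_simps)
  moreover have "(cmod c)^2 > 0" using nz c_def by simp
  ultimately have "Re (h (a + lam *s b) (a + lam *s b)) < 0" using eq by (simp add: mult_pos_neg)
  with form_nonneg[OF x] show False by simp
qed

definition op_poly :: "nat \<Rightarrow> complex poly \<Rightarrow> 'v \<Rightarrow> 'v" where
  "op_poly l p w = (\<Sum>i\<le>degree p. coeff p i *s (T l ^^ i) w)"

lemma op_poly_degree_le:
  assumes "degree p \<le> K"
  shows "op_poly l p w = (\<Sum>i\<le>K. coeff p i *s (T l ^^ i) w)"
  unfolding op_poly_def
proof (rule sum.mono_neutral_left)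
  show "\<forall>i\<in>{..K} - {..degree p}. coeff p i *s (T l ^^ i) w = 0"
    by (auto simp: coeff_eq_0)
qed (use assms in auto)

lemma op_poly_add: "op_poly l (p + q) w = op_poly l p w + op_poly l q w"
proof -
  define K where "K = max (degree p) (degree q)"
  have "degree (p + q) \<le> K" unfolding K_def by (rule degree_add_le) auto
  then show ?thesis
    by (simp add: op_poly_degree_le[of _ K] K_def sum.distrib scale_left_distrib)
qed

lemma op_poly_smult: "op_poly l (smult c p) w = c *s op_poly l p w"
proof -
  have dd: "degree (smult c p) \<le> degree p" by (rule degree_smult_le)
  show ?thesis by (simp add: op_poly_degree_le[OF dd] op_poly_def scale_sum_right)
qed

lemma op_poly_pCons_0: "op_poly l (pCons 0 p) w = T l (op_poly l p w)"
proof -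
  have "op_poly l (pCons 0 p) w = (\<Sum>i\<le>Suc (degree p). coeff (pCons 0 p) i *s (T l ^^ i) w)"
    by (rule op_poly_degree_le) (rule degree_pCons_le)
  also have "\<dots> = (\<Sum>i\<le>degree p. coeff p i *s (T l ^^ Suc i) w)"
    by (subst sum.atMost_Suc_shift) simp
  also have "\<dots> = T l (op_poly l p w)"
    by (simp add: op_poly_def T_sum T_scale)
  finally show ?thesis .
qed

lemma op_poly_linear_factor: "op_poly l ([:-a, 1:] * q) w = T l (op_poly l q w) - a *s op_poly l q w"
proof -
  have eq: "[:-a, 1:] * q = pCons 0 q + smult (-a) q" by (simp add: mult_pCons_left)
  show ?thesis unfolding eq op_poly_add op_poly_smult op_poly_pCons_0 by simp
qed

fun op_factors :: "nat \<Rightarrow> (nat \<Rightarrow> complex) \<Rightarrow> nat \<Rightarrow> 'v \<Rightarrow> 'v" where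
  "op_factors l rt 0 w = w"
| "op_factors l rt (Suc i) w = T l (op_factors l rt i w) - rt i *s op_factors l rt i w"

lemma op_poly_1: "op_poly l 1 w = w"
  by (simp add: op_poly_def)

lemma op_poly_prod_linear: "op_poly l (\<Prod>i<D. [:-rt i, 1:]) w = op_factors l rt D w"
proof (induction D)
  case 0 then show ?case by (simp add: op_poly_1)
next
  case (Suc D)
  have "(\<Prod>i<Suc D. [:-rt i, 1:]) = [:-rt D, 1:] * (\<Prod>i<D. [:-rt i, 1:])"
    by (simp add: lessThan_Suc mult.commute)
  then show ?case using Suc by (simp only: op_poly_linear_factor op_factors.simps)
qed

lemma op_factors_in:
  assumes W: "subspace W" and inv: "\<forall>a\<in>W. T l a \<in> W" and w: "w \<in> W"
  shows "op_factors l rt i w \<in> W"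
  by (induction i) (auto simp: w inv intro!: subspace_diff[OF W] subspace_scale[OF W])

lemma T_power_in:
  assumes inv: "\<forall>a\<in>W. T l a \<in> W" and w: "w \<in> W"
  shows "(T l ^^ i) w \<in> W"
  by (induction i) (auto simp: w inv)

lemma T_powers_dependent:
  assumes WV: "W \<subseteq> V" and inv: "\<forall>a\<in>W. T l a \<in> W" and w: "w \<in> W"
  shows "\<exists>c. (\<exists>i\<le>card F. c i \<noteq> 0) \<and> (\<Sum>i\<le>card F. c i *s (T l ^^ i) w) = 0"
proof (cases "inj_on (\<lambda>i. (T l ^^ i) w) {..card F}")
  case False
  then obtain i j where ij: "i \<le> card F" "j \<le> card F" "i \<noteq> j" "(T l ^^ i) w = (T l ^^ j) w"
    unfolding inj_on_def by auto
  define c where "c k = (if k = i then 1 else if k = j then -1 else (0::complex))" for k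
  have "\<And>k. c k *s (T l ^^ k) w = (if k = i then (T l ^^ k) w else 0) + (if k = j then - (T l ^^ k) w else 0)"
    using ij(3) by (auto simp: c_def)
  then have "(\<Sum>k\<le>card F. c k *s (T l ^^ k) w) = (T l ^^ i) w - (T l ^^ j) w"
    using ij by (simp add: sum.distrib sum.delta)
  then show ?thesis using ij by (intro exI[of _ c]) (auto simp: c_def)
next
  case True
  define S where "S = (\<lambda>i. (T l ^^ i) w) ` {..card F}"
  have cS: "card S = Suc (card F)" using True by (simp add: S_def card_image)
  have SW: "S \<subseteq> W" using T_power_in[OF inv w] by (auto simp: S_def)
  have "dependent S"
  proof (rule ccontr)
    assume "\<not> dependent S"
    then have "card S \<le> card F" using independent_span_bound[OF finite_F, of S] SW WV V_span by auto
    with cS show False by simp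
  qed
  then obtain t u where tu: "finite t" "t \<subseteq> S" "(\<Sum>v\<in>t. u v *s v) = 0" "\<exists>v\<in>t. u v \<noteq> 0"
    unfolding dependent_explicit by blast
  define c where "c i = (if (T l ^^ i) w \<in> t then u ((T l ^^ i) w) else 0)" for i
  define I where "I = {i\<in>{..card F}. (T l ^^ i) w \<in> t}"
  have "(\<Sum>i\<le>card F. c i *s (T l ^^ i) w) = (\<Sum>i\<in>I. u ((T l ^^ i) w) *s (T l ^^ i) w)"
    by (rule sum.mono_neutral_cong_right) (auto simp: I_def c_def)
  also have "\<dots> = (\<Sum>v\<in>t. u v *s v)"
  proof -
    have inj: "inj_on (\<lambda>i. (T l ^^ i) w) I" using True by (rule inj_on_subset) (auto simp: I_def)
    have im: "(\<lambda>i. (T l ^^ i) w) ` I = t" using tu(2) by (auto simp: I_def S_def)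
    show ?thesis using sum.reindex[OF inj, of "\<lambda>v. u v *s v"] im by simp
  qed
  finally have s0: "(\<Sum>i\<le>card F. c i *s (T l ^^ i) w) = 0" using tu(3) by simp
  obtain v where v: "v \<in> t" "u v \<noteq> 0" using tu(4) by blast
  then obtain i where "i \<le> card F" "v = (T l ^^ i) w" using tu(2) by (auto simp: S_def)
  then have "c i \<noteq> 0" using v by (auto simp: c_def)
  then show ?thesis using s0 \<open>i \<le> card F\<close> by blast
qed

lemma eigenvector_exists:
  assumes W: "subspace W" and WV: "W \<subseteq> V" and l: "l < d" and inv: "\<forall>a\<in>W. T l a \<in> W"
    and w: "w \<in> W" and ww: "h w w \<noteq> 0"
  shows "\<exists>u\<in>W. h u u \<noteq> 0 \<and> (\<exists>lam. \<forall>v\<in>V. h (T l u) v = lam * h u v)"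
proof -
  obtain c where c: "\<exists>i\<le>card F. c i \<noteq> 0" "(\<Sum>i\<le>card F. c i *s (T l ^^ i) w) = 0"
    using T_powers_dependent[OF WV inv w] by blast
  define p where "p = (\<Sum>i\<le>card F. monom (c i) i)"
  have cp: "coeff p k = (if k \<le> card F then c k else 0)" for k
    by (simp add: p_def coeff_sum coeff_monom)
  have dp: "degree p \<le> card F" by (rule degree_le) (auto simp: cp)
  have p0: "p \<noteq> 0" using c(1) cp by (metis coeff_0)
  have "op_poly l p w = 0" using c(2) by (simp add: op_poly_degree_le[OF dp] cp)
  obtain rt where rt: "smult (lead_coeff p) (\<Prod>i<degree p. [:-rt i, 1:]) = p"
    using complex_poly_decompose' by blast
  have "op_poly l p w = lead_coeff p *s op_factors l rt (degree p) w"
    by (subst rt[symmetric]) (simp add: op_poly_smult op_poly_prod_linear)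
  with \<open>op_poly l p w = 0\<close> p0 have z0: "op_factors l rt (degree p) w = 0" by simp
  have "h (op_factors l rt (degree p) w) (op_factors l rt (degree p) w) = 0" using z0 form_zero_left V_zero by simp
  then obtain i where i: "h (op_factors l rt i w) (op_factors l rt i w) \<noteq> 0" "h (op_factors l rt (Suc i) w) (op_factors l rt (Suc i) w) = 0"
    using exists_Suc_transition[of "\<lambda>i. h (op_factors l rt i w) (op_factors l rt i w) \<noteq> 0"] ww
    by auto
  define u where "u = op_factors l rt i w"
  have uW: "u \<in> W" using op_factors_in[OF W inv w] u_def by blast
  then have uV: "u \<in> V" using WV by blast
  have zV: "op_factors l rt (Suc i) w \<in> V" using op_factors_in[OF W inv w] WV by blast
  have "\<forall>v\<in>V. h (T l u) v = rt i * h u v"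
  proof
    fix v assume v: "v \<in> V"
    have "h (op_factors l rt (Suc i) w) v = 0" using form_null_orthogonal[OF zV v i(2)] .
    then have "h (T l u - rt i *s u) v = 0" by (simp add: u_def)
    then show "h (T l u) v = rt i * h u v"
      using form_diff_left[OF T_V[OF l uV] V_scale[OF uV] v] form_scale_left[OF uV v] by simp
  qed
  then show ?thesis using uW i(1) u_def by blast
qed

lemma eigenspace_invariant:
  fixes lam :: complex
  assumes W: "subspace W" "W \<subseteq> V" "\<forall>l<d. \<forall>a\<in>W. T l a \<in> W" and k: "k < d"
  defines "E \<equiv> {x\<in>W. \<forall>v\<in>V. h (T k x) v = lam * h x v}"
  shows "subspace E" and "\<forall>l<d. \<forall>a\<in>E. T l a \<in> E"
proof -
  have EV: "E \<subseteq> V" using W(2) by (auto simp: E_def)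
  have TkV: "x \<in> V \<Longrightarrow> T k x \<in> V" for x using T_V[OF k] .
  show "subspace E"
    unfolding subspace_def
  proof (intro conjI ballI allI)
    show "0 \<in> E" using W(1) subspace_0 by (auto simp: E_def T_zero form_zero_left)
  next
    fix x y assume x: "x \<in> E" and y: "y \<in> E"
    then have "x \<in> V" "y \<in> V" "x + y \<in> W" using EV W(1) subspace_add by (auto simp: E_def)
    then show "x + y \<in> E" using x y by (auto simp: E_def T_add form_add_left TkV algebra_simps)
  next
    fix c x assume x: "x \<in> E"
    then have "x \<in> V" "c *s x \<in> W" using EV W(1) subspace_scale by (auto simp: E_def)
    then show "c *s x \<in> E" using x by (auto simp: E_def T_scale form_scale_left TkV)
  qed
  show "\<forall>l<d. \<forall>a\<in>E. T l a \<in> E"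
  proof (intro allI impI ballI)
    fix l a assume l: "l < d" and a: "a \<in> E"
    then have aV: "a \<in> V" using EV by auto
    have "h (T k (T l a)) v = lam * h (T l a) v" if v: "v \<in> V" for v
    proof -
      have "h (T k (T l a)) v = h (T l (T k a)) v" using T_commute[OF k l aV v] .
      also have "\<dots> = h (T k a) (T l v)" using T_symmetric[OF l TkV[OF aV] v] .
      also have "\<dots> = lam * h a (T l v)" using a T_V[OF l v] by (auto simp: E_def)
      also have "\<dots> = lam * h (T l a) v" using T_symmetric[OF l aV v] by simp
      finally show ?thesis .
    qed
    moreover have "T l a \<in> W" using W(3) a l by (auto simp: E_def)
    ultimately show "T l a \<in> E" by (simp add: E_def)
  qed
qed

lemma joint_eigenvector_exists:
  assumes "k \<le> d" "subspace W" "W \<subseteq> V" "\<forall>l<d. \<forall>a\<in>W. T l a \<in> W" "w \<in> W" "h w w \<noteq> 0"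
  shows "\<exists>u\<in>W. h u u \<noteq> 0 \<and> (\<forall>l<k. \<exists>lam. \<forall>v\<in>V. h (T l u) v = lam * h u v)"
  using assms
proof (induction k arbitrary: W w)
  case 0 then show ?case by blast
next
  case (Suc k)
  have k: "k < d" using Suc.prems by simp
  obtain u0 lam where u0: "u0 \<in> W" "h u0 u0 \<noteq> 0" "\<forall>v\<in>V. h (T k u0) v = lam * h u0 v"
    using eigenvector_exists[OF Suc.prems(2,3) k] Suc.prems(4,5,6) k by blast
  define E where "E = {x\<in>W. \<forall>v\<in>V. h (T k x) v = lam * h x v}"
  have "subspace E" "\<forall>l<d. \<forall>a\<in>E. T l a \<in> E"
    unfolding E_def by (rule eigenspace_invariant[OF Suc.prems(2-4) k])+
  moreover have "E \<subseteq> V" "u0 \<in> E" using Suc.prems(3) u0 by (auto simp: E_def)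
  ultimately obtain u where u: "u \<in> E" "h u u \<noteq> 0" "\<forall>l<k. \<exists>lam. \<forall>v\<in>V. h (T l u) v = lam * h u v"
    using Suc.IH[of E u0] Suc.prems(1) u0(2) by auto
  have "\<forall>l<Suc k. \<exists>lam. \<forall>v\<in>V. h (T l u) v = lam * h u v"
    using u(1,3) by (auto simp: E_def less_Suc_eq)
  moreover have "u \<in> W" using u(1) by (simp add: E_def)
  ultimately show ?case using u(2) by blast
qed

definition orthonormal :: "nat \<Rightarrow> (nat \<Rightarrow> 'v) \<Rightarrow> bool" where
  "orthonormal r e \<longleftrightarrow> (\<forall>i<r. e i \<in> V) \<and> (\<forall>i<r. \<forall>j<r. h (e i) (e j) = (if i = j then 1 else 0))"

definition orthonormal_eigen :: "nat \<Rightarrow> (nat \<Rightarrow> 'v) \<Rightarrow> (nat \<Rightarrow> nat \<Rightarrow> real) \<Rightarrow> bool" where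
  "orthonormal_eigen r e t \<longleftrightarrow> orthonormal r e \<and>
     (\<forall>i<r. \<forall>l<d. \<forall>v\<in>V. h v (T l (e i)) = of_real (t i l) * h v (e i))"

lemma orthonormal_card_le:
  assumes "orthonormal r e" shows "r \<le> card F"
proof -
  have eV: "\<And>i. i < r \<Longrightarrow> e i \<in> V" and on: "\<And>i j. i < r \<Longrightarrow> j < r \<Longrightarrow> h (e i) (e j) = (if i = j then 1 else 0)"
    using assms by (auto simp: orthonormal_def)
  have inj: "inj_on e {..<r}"
  proof
    fix i j assume i: "i \<in> {..<r}" and j: "j \<in> {..<r}" and eq: "e i = e j"
    show "i = j"
    proof (rule ccontr)
      assume "i \<noteq> j"
      then have "h (e i) (e j) = 0" using on i j by auto
      moreover have "h (e i) (e j) = 1" using on[of i i] i eq by auto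
      ultimately show False by simp
    qed
  qed
  have ind: "independent (e ` {..<r})"
    unfolding dependent_explicit
  proof (rule notI, elim exE conjE bexE)
    fix tt u v assume tt: "finite tt" "tt \<subseteq> e ` {..<r}" "(\<Sum>v\<in>tt. u v *s v) = 0" "v \<in> tt" "u v \<noteq> 0"
    obtain j where j: "j < r" "v = e j" using tt by auto
    have ttV: "\<And>x. x \<in> tt \<Longrightarrow> x \<in> V" using tt(2) eV by auto
    have "0 = h (\<Sum>x\<in>tt. u x *s x) (e j)" using tt(3) form_zero_left eV j by simp
    also have "\<dots> = (\<Sum>x\<in>tt. u x * h x (e j))"
      using ttV eV[OF j(1)] by (simp add: form_sum_left V_scale form_scale_left)
    also have "\<dots> = (\<Sum>x\<in>tt. if x = v then u x else 0)"
    proof (rule sum.cong)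
      fix x assume x: "x \<in> tt"
      then obtain i where i: "i < r" "x = e i" using tt by auto
      show "u x * h x (e j) = (if x = v then u x else 0)"
        using on[OF i(1) j(1)] i j inj by (auto simp: inj_on_def)
    qed simp
    also have "\<dots> = u v" using tt by simp
    finally show False using tt by simp
  qed
  have "e ` {..<r} \<subseteq> span F" using eV V_span by auto
  then have "card (e ` {..<r}) \<le> card F" using independent_span_bound[OF finite_F ind] by auto
  then show ?thesis using inj by (simp add: card_image)
qed

lemma orthonormal_parseval:
  assumes onf: "orthonormal r e" and nul: "\<forall>w\<in>V. (\<forall>i<r. h w (e i) = 0) \<longrightarrow> h w w = 0"
  shows "\<forall>v\<in>V. \<forall>w\<in>V. h v w = (\<Sum>i<r. h v (e i) * h (e i) w)"
proof (intro ballI)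
  fix v w assume v: "v \<in> V" and w: "w \<in> V"
  have eV: "\<And>i. i < r \<Longrightarrow> e i \<in> V" and on: "\<And>i j. i < r \<Longrightarrow> j < r \<Longrightarrow> h (e i) (e j) = (if i = j then 1 else 0)"
    using onf by (auto simp: orthonormal_def)
  define s where "s = (\<Sum>i<r. h w (e i) *s e i)"
  have sV: "s \<in> V" unfolding s_def by (rule V_sum) (simp add: V_scale eV)
  define w' where "w' = w - s"
  have w'V: "w' \<in> V" using w sV V_diff w'_def by blast
  have "\<forall>j<r. h w' (e j) = 0"
  proof (intro allI impI)
    fix j assume j: "j < r"
    have "h s (e j) = (\<Sum>i<r. h (h w (e i) *s e i) (e j))"
      unfolding s_def by (rule form_sum_left) (auto intro: V_scale eV j)
    also have "\<dots> = (\<Sum>i<r. h w (e i) * h (e i) (e j))"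
      by (rule sum.cong) (auto simp: form_scale_left eV j)
    also have "\<dots> = (\<Sum>i<r. if i = j then h w (e i) else 0)"
      by (rule sum.cong) (auto simp: on j)
    also have "\<dots> = h w (e j)" using j by simp
    finally show "h w' (e j) = 0" using form_diff_left[OF w sV eV[OF j]] w'_def by simp
  qed
  then have "h w' w' = 0" using nul w'V by blast
  then have "h w' v = 0" using form_null_orthogonal[OF w'V v] by simp
  then have hv0: "h v w' = 0" using form_hermitian[OF v w'V] by simp
  have "w = w' + s" using w'_def by simp
  then have "h v w = h v w' + h v s" using form_add_right[OF w'V sV v] by simp
  also have "\<dots> = (\<Sum>i<r. h v (h w (e i) *s e i))"
    unfolding hv0 s_def by (simp, rule form_sum_right) (auto intro: V_scale eV v)
  also have "\<dots> = (\<Sum>i<r. cnj (h w (e i)) * h v (e i))"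
    by (rule sum.cong) (auto simp: form_scale_right eV v)
  also have "\<dots> = (\<Sum>i<r. h v (e i) * h (e i) w)"
    using form_hermitian[OF w] eV by (simp add: mult.commute)
  finally show "h v w = (\<Sum>i<r. h v (e i) * h (e i) w)" .
qed

lemma normalized_eigenvector:
  assumes u: "u \<in> V" "h u u \<noteq> 0"
    and lam: "\<And>l v. l < d \<Longrightarrow> v \<in> V \<Longrightarrow> h (T l u) v = lam l * h u v"
  obtains c :: complex and s :: "nat \<Rightarrow> real" where "h (c *s u) (c *s u) = 1"
    and "\<And>l v. l < d \<Longrightarrow> v \<in> V \<Longrightarrow> h v (T l (c *s u)) = of_real (s l) * h v (c *s u)"
proof -
  define hu where "hu = Re (h u u)"
  have huc: "h u u = of_real hu" using form_self_real[OF u(1)] hu_def by (simp add: complex_eq_iff)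
  have "hu \<noteq> 0" using u(2) huc by auto
  then have hu0: "hu > 0" using form_nonneg[OF u(1)] hu_def by linarith
  have lam_real: "lam l = of_real (Re (lam l))" if l: "l < d" for l
  proof -
    have "h (T l u) u = cnj (h (T l u) u)"
      using T_symmetric[OF l u(1) u(1)] form_hermitian[OF u(1) T_V[OF l u(1)]] by simp
    then have "lam l * of_real hu = cnj (lam l) * of_real hu" using lam[OF l u(1)] huc by simp
    then have "lam l = cnj (lam l)" using hu0 by simp
    then show ?thesis by (simp add: complex_eq_iff)
  qed
  define c where "c = complex_of_real (1 / sqrt hu)"
  have "h (c *s u) (c *s u) = c * cnj c * h u u"
    using u(1) by (simp add: form_scale_left form_scale_right V_scale)
  also have "\<dots> = of_real ((1 / sqrt hu) * (1 / sqrt hu) * hu)"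
    unfolding c_def huc by (simp only: complex_cnj_complex_of_real of_real_mult)
  also have "\<dots> = 1" using hu0 by (simp add: field_simps)
  finally have unit: "h (c *s u) (c *s u) = 1" .
  have eigen: "h v (T l (c *s u)) = of_real (Re (lam l)) * h v (c *s u)" if l: "l < d" and v: "v \<in> V" for l v
  proof -
    have "h v (T l u) = cnj (h (T l u) v)" using form_hermitian[OF v T_V[OF l u(1)]] .
    also have "\<dots> = cnj (lam l) * h v u" using lam[OF l v] form_hermitian[OF u(1) v] by simp
    also have "\<dots> = lam l * h v u" using lam_real[OF l] by (metis complex_cnj_complex_of_real)
    finally have "h v (T l u) = lam l * h v u" .
    then have "h v (T l (c *s u)) = lam l * h v (c *s u)"
      using T_V[OF l u(1)] u(1) v by (simp add: T_scale form_scale_right)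
    with lam_real[OF l] show ?thesis by metis
  qed
  show ?thesis by (rule that[OF unit eigen])
qed

text \<open>The orthogonal complement of a joint eigensystem is invariant under the symmetric
  operators, so it contains a further joint eigenvector.\<close>

lemma orthonormal_eigen_extend:
  assumes onf: "orthonormal_eigen r e t"
    and w: "w \<in> V" "\<forall>i<r. h w (e i) = 0" "h w w \<noteq> 0"
  shows "\<exists>e' t'. orthonormal_eigen (Suc r) e' t'"
proof -
  have eV: "\<And>i. i < r \<Longrightarrow> e i \<in> V"
    and on: "\<And>i j. i < r \<Longrightarrow> j < r \<Longrightarrow> h (e i) (e j) = (if i = j then 1 else 0)"
    and eig: "\<And>i l v. i < r \<Longrightarrow> l < d \<Longrightarrow> v \<in> V \<Longrightarrow> h v (T l (e i)) = of_real (t i l) * h v (e i)"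
    using onf by (auto simp: orthonormal_eigen_def orthonormal_def)
  define W where "W = {x\<in>V. \<forall>i<r. h x (e i) = 0}"
  have subW: "subspace W"
    unfolding subspace_def W_def
    using V_zero eV by (auto simp: form_zero_left V_add V_scale form_add_left form_scale_left)
  have invW: "\<forall>l<d. \<forall>a\<in>W. T l a \<in> W"
    using eV eig by (auto simp: W_def T_V T_symmetric)
  obtain u where u: "u \<in> W" "h u u \<noteq> 0" "\<forall>l<d. \<exists>lam. \<forall>v\<in>V. h (T l u) v = lam * h u v"
    using joint_eigenvector_exists[OF order_refl subW _ invW, of w] w by (auto simp: W_def)
  obtain lam where lam: "\<And>l v. l < d \<Longrightarrow> v \<in> V \<Longrightarrow> h (T l u) v = lam l * h u v"
    using u(3) by metis
  have uV: "u \<in> V" using u(1) by (simp add: W_def)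
  obtain c s where unit: "h (c *s u) (c *s u) = 1"
    and eig_new: "\<And>l v. l < d \<Longrightarrow> v \<in> V \<Longrightarrow> h v (T l (c *s u)) = of_real (s l) * h v (c *s u)"
    using normalized_eigenvector[OF uV u(2) lam] by blast
  have orth: "h (c *s u) (e i) = 0" "h (e i) (c *s u) = 0" if i: "i < r" for i
  proof -
    show "h (c *s u) (e i) = 0" using u(1) uV eV[OF i] i by (simp add: form_scale_left W_def)
    then show "h (e i) (c *s u) = 0" using form_hermitian[OF eV[OF i] V_scale[OF uV]] by simp
  qed
  have "orthonormal_eigen (Suc r) (e(r := c *s u)) (t(r := s))"
    unfolding orthonormal_eigen_def orthonormal_def
  proof (intro conjI allI impI ballI)
    fix i assume "i < Suc r"
    then show "(e(r := c *s u)) i \<in> V" using eV V_scale[OF uV] by (auto simp: less_Suc_eq)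
  next
    fix i j assume "i < Suc r" "j < Suc r"
    then show "h ((e(r := c *s u)) i) ((e(r := c *s u)) j) = (if i = j then 1 else 0)"
      using on orth unit by (auto simp: less_Suc_eq)
  next
    fix i l v assume "i < Suc r" "l < d" "v \<in> V"
    then show "h v (T l ((e(r := c *s u)) i)) = of_real ((t(r := s)) i l) * h v ((e(r := c *s u)) i)"
      using eig eig_new by (auto simp: less_Suc_eq)
  qed
  then show ?thesis by blast
qed

theorem orthonormal_eigen_parseval_exists:
  "\<exists>r e t. orthonormal_eigen r e t \<and> (\<forall>v\<in>V. \<forall>w\<in>V. h v w = (\<Sum>i<r. h v (e i) * h (e i) w))"
proof -
  define R where "R = {r. \<exists>e t. orthonormal_eigen r e t}"
  have finR: "finite R"
    using orthonormal_card_le by (intro finite_subset[of R "{..card F}"]) (auto simp: R_def orthonormal_eigen_def)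
  have "0 \<in> R" by (auto simp: R_def orthonormal_eigen_def orthonormal_def)
  then have "Max R \<in> R" using finR by (intro Max_in) auto
  then obtain e t where onf: "orthonormal_eigen (Max R) e t" by (auto simp: R_def)
  have "h w w = 0" if "w \<in> V" "\<forall>i<Max R. h w (e i) = 0" for w
  proof (rule ccontr)
    assume "h w w \<noteq> 0"
    then have "Suc (Max R) \<in> R"
      using orthonormal_eigen_extend[OF onf that] unfolding R_def by blast
    then show False using Max_ge[OF finR, of "Suc (Max R)"] by simp
  qed
  moreover have "orthonormal (Max R) e" using onf by (simp add: orthonormal_eigen_def)
  ultimately show ?thesis using orthonormal_parseval onf by blast
qed

end

section \<open>Matrix polynomials\<close>

text \<open>\<open>mpunit \<beta> i j\<close> is \<open>x\<^sup>\<beta> e\<^sub>i\<^sub>j\<close>, and \<open>mpshift l p\<close> is the product \<open>x\<^sub>l p\<close>.\<close>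

definition mpunit :: "(nat\<Rightarrow>nat) \<Rightarrow> nat \<Rightarrow> nat \<Rightarrow> mpmat" where
  "mpunit \<beta> i j = (\<lambda>\<alpha> i' j'. if \<alpha> = \<beta> \<and> i' = i \<and> j' = j then 1 else 0)"

definition mpshift :: "nat \<Rightarrow> mpmat \<Rightarrow> mpmat" where
  "mpshift l p = (\<lambda>\<alpha> i j. if 0 < \<alpha> l then p (\<alpha>(l := \<alpha> l - 1)) i j else 0)"

definition mp_support :: "nat \<Rightarrow> nat \<Rightarrow> nat \<Rightarrow> ((nat\<Rightarrow>nat) \<times> nat \<times> nat) set" where
  "mp_support n d K = multi_idx d K \<times> {..<n} \<times> {..<n}"

lemma mpmat_sum_apply: "(\<Sum>x\<in>A. f x) \<alpha> i j = (\<Sum>x\<in>A. f x \<alpha> i j)" for f :: "'a \<Rightarrow> mpmat"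
  by (induction A rule: infinite_finite_induct) auto

lemma finite_bounded_multi_indices:
  assumes "\<forall>x\<ge>D. (\<alpha>::nat\<Rightarrow>nat) x = 0"
  shows "finite {\<beta>. \<forall>x. \<beta> x \<le> \<alpha> x}"
proof -
  let ?S = "{\<beta>::nat\<Rightarrow>nat. \<forall>x. \<beta> x \<le> \<alpha> x}"
  have inj: "inj_on (\<lambda>\<beta>. restrict \<beta> {..<D}) ?S"
  proof
    fix \<beta> \<beta>' assume b: "\<beta> \<in> ?S" "\<beta>' \<in> ?S" and eq: "restrict \<beta> {..<D} = restrict \<beta>' {..<D}"
    show "\<beta> = \<beta>'"
    proof
      fix x show "\<beta> x = \<beta>' x"
      proof (cases "x < D")
        case True
        have "restrict \<beta> {..<D} x = restrict \<beta>' {..<D} x" using eq by simp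
        then show ?thesis using True by simp
      next
        case False then show ?thesis using b assms by (metis le_zero_eq mem_Collect_eq not_less)
      qed
    qed
  qed
  have "(\<lambda>\<beta>. restrict \<beta> {..<D}) ` ?S \<subseteq> PiE {..<D} (\<lambda>x. {..\<alpha> x})" by (intro image_subsetI, subst restrict_PiE_iff) simp
  then have "finite ((\<lambda>\<beta>. restrict \<beta> {..<D}) ` ?S)"
    by (rule finite_subset) (intro finite_PiE, auto)
  then show ?thesis using finite_imageD inj by blast
qed

lemma finite_multi_idx: "finite (multi_idx d K)"
proof -
  have "multi_idx d K \<subseteq> {\<beta>. \<forall>x. \<beta> x \<le> (\<lambda>x. if x < d then K else 0) x}"
  proof
    fix \<beta> assume b: "\<beta> \<in> multi_idx d K"
    have "\<beta> x \<le> (if x < d then K else 0)" for x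
    proof (cases "x < d")
      case True
      have "\<beta> x \<le> sum \<beta> {..<d}" using True by (intro member_le_sum) auto
      then show ?thesis using b True by (simp add: multi_idx_def)
    next
      case False then show ?thesis using b by (simp add: multi_idx_def)
    qed
    then show "\<beta> \<in> {\<beta>. \<forall>x. \<beta> x \<le> (\<lambda>x. if x < d then K else 0) x}" by simp
  qed
  then show ?thesis by (rule finite_subset) (rule finite_bounded_multi_indices[of d], auto)
qed

lemma finite_mp_support: "finite (mp_support n d K)"
  by (simp add: mp_support_def finite_multi_idx)

lemma Ak_outside_support: "p \<in> Ak n d K \<Longrightarrow> (\<alpha>, i, j) \<notin> mp_support n d K \<Longrightarrow> p \<alpha> i j = 0"
  by (auto simp: Ak_def mp_support_def)

lemma Ak_unit_expansion:
  assumes "p \<in> Ak n d K"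
  shows "p = (\<Sum>(\<alpha>,i,j)\<in>mp_support n d K. mpscale (p \<alpha> i j) (mpunit \<alpha> i j))"
proof (intro ext)
  fix \<beta> i' j'
  have "(\<Sum>(\<alpha>,i,j)\<in>mp_support n d K. mpscale (p \<alpha> i j) (mpunit \<alpha> i j)) \<beta> i' j'
      = (\<Sum>s\<in>mp_support n d K. if s = (\<beta>, i', j') then p \<beta> i' j' else 0)"
    unfolding mpmat_sum_apply by (rule sum.cong) (auto simp: mpscale_def mpunit_def split: if_splits)
  also have "\<dots> = p \<beta> i' j'" using Ak_outside_support[OF assms] by (auto simp: finite_mp_support)
  finally show "p \<beta> i' j' = (\<Sum>(\<alpha>,i,j)\<in>mp_support n d K. mpscale (p \<alpha> i j) (mpunit \<alpha> i j)) \<beta> i' j'" by simp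
qed

lemma mpadd_eq: "mpadd a b = a + b"
  by (simp add: mpadd_def fun_eq_iff)

interpretation mpvec: vector_space mpscale
  by unfold_locales (auto simp: mpscale_def fun_eq_iff algebra_simps)

lemma Ak_subspace: "mpvec.subspace (Ak n d K)"
  unfolding mpvec.subspace_def
proof (intro conjI ballI allI)
  fix x y assume "x \<in> Ak n d K" "y \<in> Ak n d K"
  then show "x + y \<in> Ak n d K" unfolding Ak_def
    by (auto, (metis add.left_neutral add.right_neutral)+)
qed (auto simp: Ak_def mpscale_def)

lemma Ak_mono: "K \<le> K' \<Longrightarrow> Ak n d K \<subseteq> Ak n d K'"
  by (force simp: Ak_def multi_idx_def)

lemma mpunit_Ak: "\<alpha> \<in> multi_idx d K \<Longrightarrow> i < n \<Longrightarrow> j < n \<Longrightarrow> mpunit \<alpha> i j \<in> Ak n d K"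
  by (auto simp: Ak_def mpunit_def)

lemma Ak_span_units: "Ak n d K \<subseteq> mpvec.span ((\<lambda>(\<alpha>,i,j). mpunit \<alpha> i j) ` mp_support n d K)"
proof
  fix p assume p: "p \<in> Ak n d K"
  show "p \<in> mpvec.span ((\<lambda>(\<alpha>,i,j). mpunit \<alpha> i j) ` mp_support n d K)"
  proof (subst Ak_unit_expansion[OF p], intro mpvec.span_sum, clarify)
    fix \<alpha> i j assume "(\<alpha>, i, j) \<in> mp_support n d K"
    then have "mpunit \<alpha> i j \<in> (\<lambda>(\<alpha>,i,j). mpunit \<alpha> i j) ` mp_support n d K" by force
    then show "mpscale (p \<alpha> i j) (mpunit \<alpha> i j) \<in> mpvec.span ((\<lambda>(\<alpha>,i,j). mpunit \<alpha> i j) ` mp_support n d K)"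
      by (intro mpvec.span_scale mpvec.span_base)
  qed
qed

lemma mpmult_add_left: "mpmult n (a + b) c = mpmult n a c + mpmult n b c"
  by (simp add: mpmult_def fun_eq_iff sum.distrib distrib_right)
lemma mpmult_add_right: "mpmult n c (a + b) = mpmult n c a + mpmult n c b"
  by (simp add: mpmult_def fun_eq_iff sum.distrib distrib_left)
lemma mpmult_scale_left: "mpmult n (mpscale s a) c = mpscale s (mpmult n a c)"
  by (simp add: mpmult_def mpscale_def fun_eq_iff sum_distrib_left mult.assoc)
lemma mpmult_scale_right: "mpmult n c (mpscale s a) = mpscale s (mpmult n c a)"
  by (simp add: mpmult_def mpscale_def fun_eq_iff sum_distrib_left algebra_simps)
lemma mpmult_zero_left: "mpmult n 0 c = 0"
  by (simp add: mpmult_def fun_eq_iff)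
lemma mpmult_zero_right: "mpmult n c 0 = 0"
  by (simp add: mpmult_def fun_eq_iff)
lemma mpmult_sum_left: "mpmult n (\<Sum>x\<in>A. f x) c = (\<Sum>x\<in>A. mpmult n (f x) c)"
proof (induction A rule: infinite_finite_induct)
  case (insert x F)
  have "sum f (insert x F) = f x + sum f F" using insert(1,2) by (rule sum.insert)
  moreover have "(\<Sum>x\<in>insert x F. mpmult n (f x) c) = mpmult n (f x) c + (\<Sum>x\<in>F. mpmult n (f x) c)"
    using insert(1,2) by (rule sum.insert)
  ultimately show ?case using insert(3) by (simp only: mpmult_add_left)
next
  case (infinite A) then show ?case by (metis sum.infinite mpmult_zero_left)
qed (simp_all only: sum.empty mpmult_zero_left)

lemma mpstar_add: "mpstar (a + b) = mpstar a + mpstar b"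
  by (simp add: mpstar_def fun_eq_iff)
lemma mpstar_scale: "mpstar (mpscale s a) = mpscale (cnj s) (mpstar a)"
  by (simp add: mpstar_def mpscale_def fun_eq_iff)
lemma mpstar_mpunit: "mpstar (mpunit \<beta> i j) = mpunit \<beta> j i"
  by (auto simp: mpstar_def mpunit_def fun_eq_iff)
lemma mpstar_mpshift: "mpstar (mpshift l a) = mpshift l (mpstar a)"
  by (simp add: mpstar_def mpshift_def fun_eq_iff)
lemma mpstar_Ak: "a \<in> Ak n d K \<Longrightarrow> mpstar a \<in> Ak n d K"
  by (auto simp: Ak_def mpstar_def)

lemma mpshift_add: "mpshift l (a + b) = mpshift l a + mpshift l b"
  by (simp add: mpshift_def fun_eq_iff)
lemma mpshift_scale: "mpshift l (mpscale s a) = mpscale s (mpshift l a)"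
  by (simp add: mpshift_def mpscale_def fun_eq_iff)
lemma mpshift_zero: "mpshift l 0 = 0"
  by (simp add: mpshift_def fun_eq_iff)
lemma mpshift_sum: "mpshift l (\<Sum>x\<in>A. f x) = (\<Sum>x\<in>A. mpshift l (f x))"
proof (induction A rule: infinite_finite_induct)
  case (insert x F)
  have "sum f (insert x F) = f x + sum f F" using insert(1,2) by (rule sum.insert)
  moreover have "(\<Sum>x\<in>insert x F. mpshift l (f x)) = mpshift l (f x) + (\<Sum>x\<in>F. mpshift l (f x))"
    using insert(1,2) by (rule sum.insert)
  ultimately show ?case using insert(3) by (simp only: mpshift_add)
next
  case (infinite A) then show ?case by (metis sum.infinite mpshift_zero)
qed (simp_all only: sum.empty mpshift_zero)

lemma mpshift_mpunit: "mpshift l (mpunit \<beta> i j) = mpunit (\<beta>(l := Suc (\<beta> l))) i j"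
proof (intro ext)
  fix \<alpha> i' j'
  have "(0 < \<alpha> l \<and> \<alpha>(l := \<alpha> l - 1) = \<beta>) \<longleftrightarrow> \<alpha> = \<beta>(l := Suc (\<beta> l))"
  proof
    assume "0 < \<alpha> l \<and> \<alpha>(l := \<alpha> l - 1) = \<beta>"
    then show "\<alpha> = \<beta>(l := Suc (\<beta> l))" by (auto simp: fun_eq_iff split: if_splits)
  next
    assume "\<alpha> = \<beta>(l := Suc (\<beta> l))"
    then show "0 < \<alpha> l \<and> \<alpha>(l := \<alpha> l - 1) = \<beta>" by (auto simp: fun_eq_iff)
  qed
  then show "mpshift l (mpunit \<beta> i j) \<alpha> i' j' = mpunit (\<beta>(l := Suc (\<beta> l))) i j \<alpha> i' j'"
    unfolding mpshift_def mpunit_def by auto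
qed

lemma sum_fun_upd_Suc:
  fixes \<beta> :: "nat \<Rightarrow> nat"
  assumes "l < d"
  shows "sum (\<beta>(l := Suc (\<beta> l))) {..<d} = Suc (sum \<beta> {..<d})"
proof -
  have "sum (\<beta>(l := Suc (\<beta> l))) {..<d} = sum (\<lambda>x. \<beta> x + (if x = l then 1 else 0)) {..<d}"
    by (rule sum.cong) auto
  also have "\<dots> = sum \<beta> {..<d} + (\<Sum>x<d. if x = l then 1 else 0)" by (simp add: sum.distrib)
  also have "(\<Sum>x<d. if x = l then 1 else 0) = (1::nat)" using assms by (subst sum.delta) auto
  finally show ?thesis by simp
qed

lemma multi_idx_incr: "l < d \<Longrightarrow> \<beta> \<in> multi_idx d K \<Longrightarrow> \<beta>(l := Suc (\<beta> l)) \<in> multi_idx d (Suc K)"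
  unfolding multi_idx_def using sum_fun_upd_Suc[of l d \<beta>] by auto

lemma mpshift_Ak: assumes "l < d" "a \<in> Ak n d K" shows "mpshift l a \<in> Ak n d (Suc K)"
  unfolding Ak_def
proof (clarify)
  fix \<alpha> i j assume nz: "mpshift l a \<alpha> i j \<noteq> 0"
  then have al: "0 < \<alpha> l" and a: "a (\<alpha>(l := \<alpha> l - 1)) i j \<noteq> 0" by (auto simp: mpshift_def split: if_splits)
  then have m: "\<alpha>(l := \<alpha> l - 1) \<in> multi_idx d K" "i < n" "j < n" using assms by (auto simp: Ak_def)
  have "\<alpha> = (\<alpha>(l := \<alpha> l - 1))(l := Suc ((\<alpha>(l := \<alpha> l - 1)) l))" using al by (auto simp: fun_eq_iff)
  then have "\<alpha> \<in> multi_idx d (Suc K)" using multi_idx_incr[OF assms(1) m(1)] by simp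
  then show "\<alpha> \<in> multi_idx d (Suc K) \<and> i < n \<and> j < n" using m by simp
qed

lemma mpshift_commute: "mpshift l (mpshift k p) = mpshift k (mpshift l p)"
  by (cases "l = k") (auto simp: mpshift_def fun_eq_iff fun_upd_twist)

lemma diff_notin_multi_idx_if_infinite:
  assumes "infinite {\<beta>'. \<forall>x. \<beta>' x \<le> \<alpha> x}" "\<beta> \<in> multi_idx d K"
  shows "(\<lambda>x. \<alpha> x - \<beta> x) \<notin> multi_idx d K'"
proof
  assume a: "(\<lambda>x. \<alpha> x - \<beta> x) \<in> multi_idx d K'"
  have "\<forall>x\<ge>d. \<alpha> x = 0" using a assms(2) by (auto simp: multi_idx_def)
  then show False using finite_bounded_multi_indices[of d \<alpha>] assms(1) by simp
qed

lemma mpmult_mpunit_left: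
  assumes b: "b \<in> Ak n d K2" and \<beta>: "\<beta> \<in> multi_idx d K1"
  shows "mpmult n (mpunit \<beta> i k) b = (\<lambda>\<alpha> i' j'. if i' = i \<and> k < n \<and> (\<forall>x. \<beta> x \<le> \<alpha> x) then b (\<lambda>x. \<alpha> x - \<beta> x) k j' else 0)"
proof (intro ext)
  fix \<alpha> :: "nat \<Rightarrow> nat" and i' j' :: nat
  let ?S = "{\<beta>'. \<forall>x. \<beta>' x \<le> \<alpha> x}"
  have "mpmult n (mpunit \<beta> i k) b \<alpha> i' j' = (\<Sum>l<n. \<Sum>\<beta>'\<in>?S. if l = k then (if \<beta>' = \<beta> \<and> i' = i then b (\<lambda>x. \<alpha> x - \<beta>' x) l j' else 0) else 0)"
    unfolding mpmult_def mpunit_def by (intro sum.cong refl) auto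
  also have "\<dots> = (\<Sum>l<n. if l = k then (\<Sum>\<beta>'\<in>?S. if \<beta>' = \<beta> \<and> i' = i then b (\<lambda>x. \<alpha> x - \<beta>' x) l j' else 0) else 0)"
    by (intro sum.cong refl) auto
  also have "\<dots> = (if k < n then (\<Sum>\<beta>'\<in>?S. if \<beta>' = \<beta> \<and> i' = i then b (\<lambda>x. \<alpha> x - \<beta>' x) k j' else 0) else 0)"
    by (simp add: sum.delta)
  also have "\<dots> = (if i' = i \<and> k < n \<and> (\<forall>x. \<beta> x \<le> \<alpha> x) then b (\<lambda>x. \<alpha> x - \<beta> x) k j' else 0)"
  proof (cases "finite ?S")
    case True
    have "(\<Sum>\<beta>'\<in>?S. if \<beta>' = \<beta> \<and> i' = i then b (\<lambda>x. \<alpha> x - \<beta>' x) k j' else 0)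
        = (\<Sum>\<beta>'\<in>?S. if \<beta>' = \<beta> then (if i' = i then b (\<lambda>x. \<alpha> x - \<beta>' x) k j' else 0) else 0)"
      by (intro sum.cong refl) auto
    also have "\<dots> = (if \<beta> \<in> ?S then (if i' = i then b (\<lambda>x. \<alpha> x - \<beta> x) k j' else 0) else 0)"
      using True by (simp add: sum.delta)
    finally show ?thesis by auto
  next
    text \<open>The sum in \<open>mpmult\<close> is the junk value \<open>0\<close> when \<open>\<alpha>\<close> has infinite support;
      then so is the coefficient of \<open>b\<close>.\<close>
    case False
    have "b (\<lambda>x. \<alpha> x - \<beta> x) k j' = 0"
      using diff_notin_multi_idx_if_infinite[OF False \<beta>, of K2] b by (auto simp: Ak_def)
    then show ?thesis using False by auto
  qed
  finally show "mpmult n (mpunit \<beta> i k) b \<alpha> i' j' = (if i' = i \<and> k < n \<and> (\<forall>x. \<beta> x \<le> \<alpha> x) then b (\<lambda>x. \<alpha> x - \<beta> x) k j' else 0)" .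
qed

lemma mpmult_mpunits:
  assumes "\<beta> \<in> multi_idx d K1" "\<gamma> \<in> multi_idx d K2" "k' < n" "j < n"
  shows "mpmult n (mpunit \<beta> i k) (mpunit \<gamma> k' j) = (if k = k' then mpunit (\<lambda>x. \<beta> x + \<gamma> x) i j else 0)"
proof -
  have b: "mpunit \<gamma> k' j \<in> Ak n d K2" using assms by (rule_tac mpunit_Ak) auto
  have eq: "((\<forall>x. \<beta> x \<le> \<alpha> x) \<and> (\<lambda>x. \<alpha> x - \<beta> x) = \<gamma>) \<longleftrightarrow> \<alpha> = (\<lambda>x. \<beta> x + \<gamma> x)" for \<alpha>
    by (auto simp: fun_eq_iff) (metis le_add_diff_inverse)
  show ?thesis unfolding mpmult_mpunit_left[OF b assms(1)]
    using assms(3) eq by (auto simp: fun_eq_iff mpunit_def; metis le_add_diff_inverse add_diff_cancel_left')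
qed

lemma mpmult_mpshift_mpunit:
  assumes \<beta>: "\<beta> \<in> multi_idx d K1" and b: "b \<in> Ak n d K2" and l: "l < d"
  shows "mpmult n (mpshift l (mpunit \<beta> i k)) b = mpshift l (mpmult n (mpunit \<beta> i k) b)"
proof -
  have \<beta>': "\<beta>(l := Suc (\<beta> l)) \<in> multi_idx d (Suc K1)" using multi_idx_incr[OF l \<beta>] .
  show ?thesis
    unfolding mpshift_mpunit mpmult_mpunit_left[OF b \<beta>'] mpmult_mpunit_left[OF b \<beta>]
  proof (intro ext)
    fix \<alpha> :: "nat \<Rightarrow> nat" and i' j' :: nat
    let ?a = "\<alpha>(l := \<alpha> l - 1)"
    have iff: "(\<forall>x. (\<beta>(l := Suc (\<beta> l))) x \<le> \<alpha> x) = (0 < \<alpha> l \<and> (\<forall>x. \<beta> x \<le> ?a x))"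
    proof
      assume H: "\<forall>x. (\<beta>(l := Suc (\<beta> l))) x \<le> \<alpha> x"
      have "Suc (\<beta> l) \<le> \<alpha> l" using H[rule_format, of l] by simp
      moreover have "\<beta> x \<le> ?a x" for x using H[rule_format, of x] by (cases "x = l") auto
      ultimately show "0 < \<alpha> l \<and> (\<forall>x. \<beta> x \<le> ?a x)" by auto
    next
      assume H: "0 < \<alpha> l \<and> (\<forall>x. \<beta> x \<le> ?a x)"
      show "\<forall>x. (\<beta>(l := Suc (\<beta> l))) x \<le> \<alpha> x"
      proof
        fix x show "(\<beta>(l := Suc (\<beta> l))) x \<le> \<alpha> x"
        proof (cases "x = l")
          case True
          have "0 < \<alpha> l" "\<beta> l \<le> \<alpha> l - 1" using H[THEN conjunct1] H[THEN conjunct2, rule_format, of l] by auto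
          then show ?thesis using True by simp
        next
          case False then show ?thesis using H[THEN conjunct2, rule_format, of x] by simp
        qed
      qed
    qed
    have eqf: "(\<lambda>x. \<alpha> x - (\<beta>(l := Suc (\<beta> l))) x) = (\<lambda>x. ?a x - \<beta> x)" by (auto simp: fun_eq_iff)
    show "(if i' = i \<and> k < n \<and> (\<forall>x. (\<beta>(l := Suc (\<beta> l))) x \<le> \<alpha> x) then b (\<lambda>x. \<alpha> x - (\<beta>(l := Suc (\<beta> l))) x) k j' else 0)
        = mpshift l (\<lambda>\<alpha> i' j'. if i' = i \<and> k < n \<and> (\<forall>x. \<beta> x \<le> \<alpha> x) then b (\<lambda>x. \<alpha> x - \<beta> x) k j' else 0) \<alpha> i' j'"
      unfolding mpshift_def iff eqf by auto
  qed
qed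

lemma mpmult_mpunit_mpshift:
  assumes \<beta>: "\<beta> \<in> multi_idx d K1" and b: "b \<in> Ak n d K2" and l: "l < d"
  shows "mpmult n (mpunit \<beta> i k) (mpshift l b) = mpshift l (mpmult n (mpunit \<beta> i k) b)"
proof -
  have b': "mpshift l b \<in> Ak n d (Suc K2)" using mpshift_Ak[OF l b] .
  show ?thesis
    unfolding mpmult_mpunit_left[OF b' \<beta>] mpmult_mpunit_left[OF b \<beta>]
  proof (intro ext)
    fix \<alpha> :: "nat \<Rightarrow> nat" and i' j' :: nat
    let ?a = "\<alpha>(l := \<alpha> l - 1)"
    have iff: "((\<forall>x. \<beta> x \<le> \<alpha> x) \<and> 0 < \<alpha> l - \<beta> l) = (0 < \<alpha> l \<and> (\<forall>x. \<beta> x \<le> ?a x))"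
    proof
      assume H: "(\<forall>x. \<beta> x \<le> \<alpha> x) \<and> 0 < \<alpha> l - \<beta> l"
      have "\<beta> x \<le> ?a x" for x using H[THEN conjunct1, rule_format, of x] H by (cases "x = l") auto
      then show "0 < \<alpha> l \<and> (\<forall>x. \<beta> x \<le> ?a x)" using H by auto
    next
      assume H: "0 < \<alpha> l \<and> (\<forall>x. \<beta> x \<le> ?a x)"
      have "\<beta> x \<le> \<alpha> x" for x using H[THEN conjunct2, rule_format, of x] H by (cases "x = l") auto
      moreover have "\<beta> l < \<alpha> l"
      proof -
        have "0 < \<alpha> l" "\<beta> l \<le> \<alpha> l - 1" using H[THEN conjunct1] H[THEN conjunct2, rule_format, of l] by auto
        then show ?thesis by simp
      qed
      ultimately show "(\<forall>x. \<beta> x \<le> \<alpha> x) \<and> 0 < \<alpha> l - \<beta> l" by auto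
    qed
    have eqf: "(\<lambda>x. \<alpha> x - \<beta> x)(l := (\<alpha> l - \<beta> l) - 1) = (\<lambda>x. ?a x - \<beta> x)" by (auto simp: fun_eq_iff)
    show "(if i' = i \<and> k < n \<and> (\<forall>x. \<beta> x \<le> \<alpha> x) then mpshift l b (\<lambda>x. \<alpha> x - \<beta> x) k j' else 0)
        = mpshift l (\<lambda>\<alpha> i' j'. if i' = i \<and> k < n \<and> (\<forall>x. \<beta> x \<le> \<alpha> x) then b (\<lambda>x. \<alpha> x - \<beta> x) k j' else 0) \<alpha> i' j'"
    proof -
      have "(if i' = i \<and> k < n \<and> (\<forall>x. \<beta> x \<le> \<alpha> x) then mpshift l b (\<lambda>x. \<alpha> x - \<beta> x) k j' else 0)
         = (if i' = i \<and> k < n \<and> ((\<forall>x. \<beta> x \<le> \<alpha> x) \<and> 0 < \<alpha> l - \<beta> l) then b ((\<lambda>x. \<alpha> x - \<beta> x)(l := (\<alpha> l - \<beta> l) - 1)) k j' else 0)"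
        by (auto simp: mpshift_def)
      then show ?thesis unfolding iff eqf by (auto simp: mpshift_def)
    qed
  qed
qed

lemma mpmult_unit_expansion:
  assumes a: "a \<in> Ak n d K"
  shows "mpmult n a b = (\<Sum>(\<alpha>,i,j)\<in>mp_support n d K. mpscale (a \<alpha> i j) (mpmult n (mpunit \<alpha> i j) b))"
proof -
  have "mpmult n a b = mpmult n (\<Sum>(\<alpha>,i,j)\<in>mp_support n d K. mpscale (a \<alpha> i j) (mpunit \<alpha> i j)) b"
    using Ak_unit_expansion[OF a] by (rule arg_cong)
  then show ?thesis by (simp add: mpmult_sum_left case_prod_beta mpmult_scale_left)
qed

lemma mpmult_mpshift_left:
  assumes a: "a \<in> Ak n d K1" and b: "b \<in> Ak n d K2" and l: "l < d"
  shows "mpmult n (mpshift l a) b = mpshift l (mpmult n a b)"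
proof -
  have "mpshift l a = mpshift l (\<Sum>(\<alpha>,i,j)\<in>mp_support n d K1. mpscale (a \<alpha> i j) (mpunit \<alpha> i j))"
    using Ak_unit_expansion[OF a] by (rule arg_cong)
  then have "mpmult n (mpshift l a) b
      = (\<Sum>(\<alpha>,i,j)\<in>mp_support n d K1. mpscale (a \<alpha> i j) (mpmult n (mpshift l (mpunit \<alpha> i j)) b))"
    by (simp add: mpshift_sum mpmult_sum_left case_prod_beta mpshift_scale mpmult_scale_left)
  also have "\<dots> = mpshift l (mpmult n a b)"
    unfolding mpmult_unit_expansion[OF a, of b] mpshift_sum
    by (intro sum.cong refl)
      (auto simp: mpshift_scale mpmult_mpshift_mpunit[OF _ b l] mp_support_def)
  finally show ?thesis .
qed

lemma mpmult_mpshift_right: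
  assumes a: "a \<in> Ak n d K1" and b: "b \<in> Ak n d K2" and l: "l < d"
  shows "mpmult n a (mpshift l b) = mpshift l (mpmult n a b)"
  unfolding mpmult_unit_expansion[OF a] mpshift_sum
  by (intro sum.cong refl) (auto simp: mpshift_scale mpmult_mpunit_mpshift[OF _ b l] mp_support_def)

lemma mpmult_Ak:
  assumes a: "a \<in> Ak n d K1" and b: "b \<in> Ak n d K2"
  shows "mpmult n a b \<in> Ak n d (K1 + K2)"
  unfolding Ak_def
proof (clarify)
  fix \<alpha> i j assume nz: "mpmult n a b \<alpha> i j \<noteq> 0"
  then have "(\<Sum>l<n. \<Sum>\<beta>\<in>{\<beta>. \<forall>x. \<beta> x \<le> \<alpha> x}. a \<beta> i l * b (\<lambda>x. \<alpha> x - \<beta> x) l j) \<noteq> 0"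
    by (simp add: mpmult_def)
  then obtain l where l: "l \<in> {..<n}" "(\<Sum>\<beta>\<in>{\<beta>. \<forall>x. \<beta> x \<le> \<alpha> x}. a \<beta> i l * b (\<lambda>x. \<alpha> x - \<beta> x) l j) \<noteq> 0"
    by (rule sum.not_neutral_contains_not_neutral)
  from l(2) obtain \<beta> where \<beta>0: "\<beta> \<in> {\<beta>. \<forall>x. \<beta> x \<le> \<alpha> x}" "a \<beta> i l * b (\<lambda>x. \<alpha> x - \<beta> x) l j \<noteq> 0"
    by (rule sum.not_neutral_contains_not_neutral)
  then have \<beta>: "\<forall>x. \<beta> x \<le> \<alpha> x" "a \<beta> i l * b (\<lambda>x. \<alpha> x - \<beta> x) l j \<noteq> 0" by auto
  then have ab: "a \<beta> i l \<noteq> 0" "b (\<lambda>x. \<alpha> x - \<beta> x) l j \<noteq> 0" by auto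
  then have m: "\<beta> \<in> multi_idx d K1" "i < n" "(\<lambda>x. \<alpha> x - \<beta> x) \<in> multi_idx d K2" "j < n"
    using a b by (auto simp: Ak_def)
  have al: "\<alpha> x = \<beta> x + (\<alpha> x - \<beta> x)" for x using \<beta>(1) by (metis le_add_diff_inverse)
  have "\<forall>x\<ge>d. \<alpha> x = 0"
  proof (intro allI impI)
    fix x assume x: "d \<le> x"
    have "\<beta> x = 0" "\<alpha> x - \<beta> x = 0" using m(1,3) x by (auto simp: multi_idx_def)
    then show "\<alpha> x = 0" by simp
  qed
  moreover have "sum \<alpha> {..<d} = sum \<beta> {..<d} + sum (\<lambda>x. \<alpha> x - \<beta> x) {..<d}"
  proof -
    have "sum \<alpha> {..<d} = sum (\<lambda>x. \<beta> x + (\<alpha> x - \<beta> x)) {..<d}"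
      by (rule sum.cong) (rule refl, rule al)
    then show ?thesis by (simp only: sum.distrib)
  qed
  ultimately have "\<alpha> \<in> multi_idx d (K1 + K2)" using m(1,3) by (auto simp: multi_idx_def)
  then show "\<alpha> \<in> multi_idx d (K1 + K2) \<and> i < n \<and> j < n" using m by simp
qed

lemma monomial_incr:
  fixes f :: "nat \<Rightarrow> complex" and g :: "nat \<Rightarrow> nat"
  assumes l: "l < d"
  shows "(\<Prod>x<d. f x ^ (g(l := Suc (g l))) x) = f l * (\<Prod>x<d. f x ^ g x)"
proof -
  have "(\<Prod>x<d. f x ^ (g(l := Suc (g l))) x) = (\<Prod>x<d. f x ^ g x * (if x = l then f x else 1))"
    by (rule prod.cong) auto
  also have "\<dots> = (\<Prod>x<d. f x ^ g x) * (\<Prod>x<d. if x = l then f x else 1)"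
    by (rule prod.distrib)
  also have "(\<Prod>x<d. if x = l then f x else 1) = f l" using l by (subst prod.delta) auto
  finally show ?thesis by (simp add: mult.commute)
qed

lemma monomial_add:
  fixes f :: "nat \<Rightarrow> complex"
  shows "(\<Prod>x<d. f x ^ g x) * (\<Prod>x<d. f x ^ h x) = (\<Prod>x<d. f x ^ (g x + h x))"
  by (simp add: prod.distrib[symmetric] power_add)

lemma split_sum_le:
  fixes \<alpha> :: "nat \<Rightarrow> nat"
  assumes "\<forall>x\<ge>D. \<alpha> x = 0" "sum \<alpha> {..<D} \<le> a + b"
  shows "\<exists>\<beta> \<gamma>. (\<forall>x\<ge>D. \<beta> x = 0) \<and> (\<forall>x\<ge>D. \<gamma> x = 0) \<and> sum \<beta> {..<D} \<le> a \<and> sum \<gamma> {..<D} \<le> b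
     \<and> (\<forall>x. \<alpha> x = \<beta> x + \<gamma> x)"
  using assms
proof (induction D arbitrary: \<alpha> a b)
  case 0
  then show ?case by (intro exI[of _ "\<lambda>_. 0"]) auto
next
  case (Suc D)
  define c where "c = min (\<alpha> D) a"
  define \<alpha>' where "\<alpha>' = \<alpha>(D := 0)"
  have z: "\<forall>x\<ge>D. \<alpha>' x = 0" using Suc.prems(1) by (auto simp: \<alpha>'_def)
  have s: "sum \<alpha>' {..<D} = sum \<alpha> {..<D}" by (rule sum.cong) (auto simp: \<alpha>'_def)
  have tot: "sum \<alpha> {..<D} + \<alpha> D \<le> a + b" using Suc.prems(2) by simp
  have le: "sum \<alpha>' {..<D} \<le> (a - c) + (b - (\<alpha> D - c))"
    using tot unfolding s c_def by (cases "\<alpha> D \<le> a") auto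
  obtain \<beta>' \<gamma>' where bg: "\<forall>x\<ge>D. \<beta>' x = 0" "\<forall>x\<ge>D. \<gamma>' x = 0" "sum \<beta>' {..<D} \<le> a - c"
    "sum \<gamma>' {..<D} \<le> b - (\<alpha> D - c)" "\<forall>x. \<alpha>' x = \<beta>' x + \<gamma>' x"
    using Suc.IH[OF z le] by blast
  define \<beta> where "\<beta> = \<beta>'(D := c)"
  define \<gamma> where "\<gamma> = \<gamma>'(D := \<alpha> D - c)"
  have ca: "c \<le> a" "c \<le> \<alpha> D" "\<alpha> D - c \<le> b" using tot unfolding c_def by auto
  have sb: "sum \<beta> {..<Suc D} = sum \<beta>' {..<D} + c"
  proof -
    have "sum \<beta> {..<D} = sum \<beta>' {..<D}" by (rule sum.cong) (auto simp: \<beta>_def)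
    then show ?thesis by (simp add: \<beta>_def)
  qed
  have sg: "sum \<gamma> {..<Suc D} = sum \<gamma>' {..<D} + (\<alpha> D - c)"
  proof -
    have "sum \<gamma> {..<D} = sum \<gamma>' {..<D}" by (rule sum.cong) (auto simp: \<gamma>_def)
    then show ?thesis by (simp add: \<gamma>_def)
  qed
  have "\<forall>x. \<alpha> x = \<beta> x + \<gamma> x"
  proof
    fix x show "\<alpha> x = \<beta> x + \<gamma> x"
    proof (cases "x = D")
      case True then show ?thesis using ca by (simp add: \<beta>_def \<gamma>_def)
    next
      case False then show ?thesis using bg(5)[rule_format, of x] by (simp add: \<beta>_def \<gamma>_def \<alpha>'_def)
    qed
  qed
  moreover have "\<forall>x\<ge>Suc D. \<beta> x = 0" "\<forall>x\<ge>Suc D. \<gamma> x = 0" using bg(1,2) by (auto simp: \<beta>_def \<gamma>_def)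
  moreover have "sum \<beta> {..<Suc D} \<le> a" "sum \<gamma> {..<Suc D} \<le> b" using sb sg bg(3,4) ca by auto
  ultimately show ?case by blast
qed

lemma multi_idx_split:
  assumes "\<alpha> \<in> multi_idx d (a + b)"
  shows "\<exists>\<beta> \<gamma>. \<beta> \<in> multi_idx d a \<and> \<gamma> \<in> multi_idx d b \<and> \<alpha> = (\<lambda>x. \<beta> x + \<gamma> x)"
proof -
  have \<alpha>: "\<forall>x\<ge>d. \<alpha> x = 0" "sum \<alpha> {..<d} \<le> a + b" using assms by (simp_all add: multi_idx_def)
  obtain \<beta> \<gamma> where "\<forall>x\<ge>d. \<beta> x = 0" "\<forall>x\<ge>d. \<gamma> x = 0" "sum \<beta> {..<d} \<le> a" "sum \<gamma> {..<d} \<le> b"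
     "\<forall>x. \<alpha> x = \<beta> x + \<gamma> x" using split_sum_le[OF \<alpha>] by blast
  then show ?thesis by (intro exI[of _ \<beta>] exI[of _ \<gamma>]) (simp add: multi_idx_def fun_eq_iff)
qed

lemma multi_idx_0: "multi_idx d 0 = {\<lambda>_. 0}"
proof -
  have "\<gamma> = (\<lambda>_. 0)" if "\<gamma> \<in> multi_idx d 0" for \<gamma>
  proof
    fix x show "\<gamma> x = 0"
      using that member_le_sum[of x "{..<d}" \<gamma>] by (cases "x < d") (auto simp: multi_idx_def)
  qed
  then show ?thesis by (auto simp: multi_idx_def)
qed

lemma multi_idx_Suc_cases:
  assumes "\<gamma> \<in> multi_idx d (Suc K)"
  shows "\<gamma> \<in> multi_idx d K \<or> (\<exists>l<d. \<exists>\<gamma>'\<in>multi_idx d K. \<gamma> = \<gamma>'(l := Suc (\<gamma>' l)))"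
proof (cases "\<gamma> \<in> multi_idx d K")
  case False
  then have sum_\<gamma>: "sum \<gamma> {..<d} = Suc K" using assms by (auto simp: multi_idx_def)
  have "\<exists>l<d. 0 < \<gamma> l"
  proof (rule ccontr)
    assume "\<not> ?thesis"
    then have "sum \<gamma> {..<d} = 0" by (intro sum.neutral) auto
    then show False using sum_\<gamma> by simp
  qed
  then obtain l where l: "l < d" "0 < \<gamma> l" by blast
  define \<gamma>' where "\<gamma>' = \<gamma>(l := \<gamma> l - 1)"
  have \<gamma>: "\<gamma> = \<gamma>'(l := Suc (\<gamma>' l))" using l by (auto simp: \<gamma>'_def fun_eq_iff)
  then have "sum \<gamma> {..<d} = Suc (sum \<gamma>' {..<d})" using sum_fun_upd_Suc[OF l(1), of \<gamma>'] by simp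
  then have "\<gamma>' \<in> multi_idx d K" using assms sum_\<gamma> by (auto simp: multi_idx_def \<gamma>'_def)
  then show ?thesis using l(1) \<gamma> by blast
qed simp

lemma lin_on_zero:
  assumes "lin_on V L" "0 \<in> V"
  shows "L 0 = 0"
proof -
  have "L (mpscale 0 0) = 0 * L 0" using assms unfolding lin_on_def by blast
  moreover have "mpscale 0 0 = (0::mpmat)" by (simp add: mpscale_def fun_eq_iff)
  ultimately show ?thesis by simp
qed

lemma lin_on_sum:
  assumes lin: "lin_on V L" and V: "mpvec.subspace V" and f: "\<And>i. i \<in> I \<Longrightarrow> f i \<in> V"
  shows "L (sum f I) = (\<Sum>i\<in>I. L (f i))"
  using f
proof (induction I rule: infinite_finite_induct)
  case (insert x F)
  have "sum f F \<in> V" using insert by (intro mpvec.subspace_sum[OF V]) auto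
  then have "L (f x + sum f F) = L (f x) + L (sum f F)"
    using lin insert.prems unfolding lin_on_def mpadd_eq by blast
  then show ?case using insert.IH insert.prems by (simp only: sum.insert[OF insert(1,2)]) simp
qed (use lin_on_zero[OF lin mpvec.subspace_0[OF V]] in auto)

lemma lin_on_Ak_eval_representation:
  fixes t :: "nat \<Rightarrow> nat \<Rightarrow> real"
  assumes lin: "lin_on (Ak n d K) L" and p: "p \<in> Ak n d K"
    and units: "\<And>\<alpha> j k. \<alpha> \<in> multi_idx d K \<Longrightarrow> j < n \<Longrightarrow> k < n \<Longrightarrow>
      L (mpunit \<alpha> j k) = (\<Sum>i<r. (\<Prod>l<d. complex_of_real (t i l) ^ \<alpha> l) * u k i * cnj (u j i))"
  shows "L p = (\<Sum>j<n. \<Sum>k<n. \<Sum>i<r. mpeval d K p j k (t i) * u k i * cnj (u j i))"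
proof -
  define M where "M = multi_idx d K"
  define tp where "tp i \<alpha> = (\<Prod>l<d. complex_of_real (t i l) ^ \<alpha> l)" for i \<alpha>
  have "L p = L (\<Sum>(\<alpha>,j,k)\<in>mp_support n d K. mpscale (p \<alpha> j k) (mpunit \<alpha> j k))"
    using Ak_unit_expansion[OF p] by (rule arg_cong)
  also have "\<dots> = (\<Sum>s\<in>mp_support n d K. L (case s of (\<alpha>,j,k) \<Rightarrow> mpscale (p \<alpha> j k) (mpunit \<alpha> j k)))"
    by (rule lin_on_sum[OF lin Ak_subspace])
      (auto intro!: mpvec.subspace_scale[OF Ak_subspace] mpunit_Ak simp: mp_support_def)
  also have "\<dots> = (\<Sum>(\<alpha>,j,k)\<in>mp_support n d K. p \<alpha> j k * (\<Sum>i<r. tp i \<alpha> * u k i * cnj (u j i)))"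
  proof (rule sum.cong[OF refl], clarify)
    fix \<alpha> j k assume "(\<alpha>, j, k) \<in> mp_support n d K"
    then have "\<alpha> \<in> M" "j < n" "k < n" by (auto simp: mp_support_def M_def)
    then show "L (mpscale (p \<alpha> j k) (mpunit \<alpha> j k)) = p \<alpha> j k * (\<Sum>i<r. tp i \<alpha> * u k i * cnj (u j i))"
      using lin mpunit_Ak units unfolding lin_on_def M_def tp_def by simp
  qed
  also have "\<dots> = (\<Sum>\<alpha>\<in>M. \<Sum>j<n. \<Sum>k<n. p \<alpha> j k * (\<Sum>i<r. tp i \<alpha> * u k i * cnj (u j i)))"
    unfolding mp_support_def M_def by (simp add: sum.cartesian_product)
  also have "\<dots> = (\<Sum>\<alpha>\<in>M. \<Sum>j<n. \<Sum>k<n. \<Sum>i<r. p \<alpha> j k * tp i \<alpha> * u k i * cnj (u j i))"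
    by (simp add: sum_distrib_left mult.assoc)
  also have "\<dots> = (\<Sum>j<n. \<Sum>k<n. \<Sum>i<r. \<Sum>\<alpha>\<in>M. p \<alpha> j k * tp i \<alpha> * u k i * cnj (u j i))"
    by (subst sum.swap, rule sum.cong[OF refl], subst sum.swap, rule sum.cong[OF refl], rule sum.swap)
  also have "\<dots> = (\<Sum>j<n. \<Sum>k<n. \<Sum>i<r. mpeval d K p j k (t i) * u k i * cnj (u j i))"
    by (simp add: mpeval_def M_def tp_def sum_distrib_right)
  finally show ?thesis .
qed

section \<open>Flat extensions\<close>

context
  fixes n d m :: nat and L :: "mpmat \<Rightarrow> complex"
  assumes lin: "lin_on (Ak n d (Suc (Suc (2*m)))) L"
    and pos: "positive_on n (Ak n d (Suc m)) L"
    and flat: "flat_ext n (Ak n d m) (Ak n d (Suc m)) L"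
begin

abbreviation "BB \<equiv> Ak n d m"
abbreviation "CC \<equiv> Ak n d (Suc m)"
abbreviation "AA \<equiv> Ak n d (Suc (Suc (2*m)))"

definition hform :: "mpmat \<Rightarrow> mpmat \<Rightarrow> complex" where
  "hform a b = L (mpmult n (mpstar b) a)"

lemma B_in_C: "a \<in> BB \<Longrightarrow> a \<in> CC"
  using Ak_mono[of m "Suc m"] by auto

lemma mpmult_star_A: "a \<in> CC \<Longrightarrow> b \<in> CC \<Longrightarrow> mpmult n (mpstar b) a \<in> AA"
  using mpmult_Ak[OF mpstar_Ak[of b n d "Suc m"] , of a "Suc m"] by (simp add: mult_2)

lemma L_add: "a \<in> AA \<Longrightarrow> b \<in> AA \<Longrightarrow> L (a + b) = L a + L b"
  using lin by (simp add: lin_on_def mpadd_eq)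
lemma L_scale: "a \<in> AA \<Longrightarrow> L (mpscale c a) = c * L a"
  using lin by (simp add: lin_on_def)
lemma C_subspace: "mpvec.subspace CC" by (rule Ak_subspace)
lemma C_add: "a \<in> CC \<Longrightarrow> b \<in> CC \<Longrightarrow> a + b \<in> CC" using C_subspace mpvec.subspace_add by blast
lemma C_scale: "a \<in> CC \<Longrightarrow> mpscale s a \<in> CC" using C_subspace mpvec.subspace_scale by blast
lemma C_diff: "a \<in> CC \<Longrightarrow> b \<in> CC \<Longrightarrow> a - b \<in> CC" using C_subspace mpvec.subspace_diff by blast

lemma hform_add_left:
  assumes a: "a \<in> CC" and b: "b \<in> CC" and c: "c \<in> CC"
  shows "hform (a + b) c = hform a c + hform b c"
  unfolding hform_def mpmult_add_right by (rule L_add[OF mpmult_star_A[OF a c] mpmult_star_A[OF b c]])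
lemma hform_add_right:
  assumes a: "a \<in> CC" and b: "b \<in> CC" and c: "c \<in> CC"
  shows "hform c (a + b) = hform c a + hform c b"
  unfolding hform_def mpstar_add mpmult_add_left by (rule L_add[OF mpmult_star_A[OF c a] mpmult_star_A[OF c b]])
lemma hform_scale_left:
  assumes a: "a \<in> CC" and c: "c \<in> CC"
  shows "hform (mpscale s a) c = s * hform a c"
  unfolding hform_def mpmult_scale_right by (rule L_scale[OF mpmult_star_A[OF a c]])
lemma hform_scale_right:
  assumes a: "a \<in> CC" and c: "c \<in> CC"
  shows "hform c (mpscale s a) = cnj s * hform c a"
  unfolding hform_def mpstar_scale mpmult_scale_left by (rule L_scale[OF mpmult_star_A[OF c a]])
lemma hform_self_real: "a \<in> CC \<Longrightarrow> Im (hform a a) = 0"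
  using pos by (simp add: positive_on_def hform_def)
lemma hform_self_nonneg: "a \<in> CC \<Longrightarrow> 0 \<le> Re (hform a a)"
  using pos by (simp add: positive_on_def hform_def)

text \<open>Polarisation: \<open>\<langle>a + b, a + b\<rangle>\<close> and \<open>\<langle>a + i b, a + i b\<rangle>\<close> are real.\<close>

lemma hform_hermitian:
  assumes a: "a \<in> CC" and b: "b \<in> CC"
  shows "hform a b = cnj (hform b a)"
proof -
  define x where "x = hform a b"
  define y where "y = hform b a"
  have ib: "mpscale \<i> b \<in> CC" using C_scale[OF b] .
  have "Im (hform (a + b) (a + b)) = 0" using hform_self_real[OF C_add[OF a b]] .
  moreover have "hform (a + b) (a + b) = hform a a + x + y + hform b b"
    using hform_add_left[OF a b C_add[OF a b]] hform_add_right[OF a b a] hform_add_right[OF a b b] x_def y_def by simp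
  ultimately have 1: "Im x + Im y = 0" using hform_self_real[OF a] hform_self_real[OF b] by simp
  have e2: "hform (a + mpscale \<i> b) (a + mpscale \<i> b) = hform a (a + mpscale \<i> b) + hform (mpscale \<i> b) (a + mpscale \<i> b)"
    by (rule hform_add_left[OF a ib C_add[OF a ib]])
  have e3: "hform a (a + mpscale \<i> b) = hform a a + cnj \<i> * x"
    using hform_add_right[OF a ib a] hform_scale_right[OF b a] x_def by simp
  have e4: "hform (mpscale \<i> b) (a + mpscale \<i> b) = \<i> * (y + cnj \<i> * hform b b)"
    using hform_scale_left[OF b C_add[OF a ib]] hform_add_right[OF a ib b] hform_scale_right[OF b b] y_def by simp
  have "Im (hform (a + mpscale \<i> b) (a + mpscale \<i> b)) = 0" using hform_self_real[OF C_add[OF a ib]] .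
  then have "Im (hform a a + cnj \<i> * x + \<i> * (y + cnj \<i> * hform b b)) = 0" using e2 e3 e4 by simp
  then have 2: "Re y - Re x = 0" using hform_self_real[OF a] hform_self_real[OF b] by (simp add: algebra_simps)
  show ?thesis using 1 2 by (simp add: complex_eq_iff x_def[symmetric] y_def[symmetric])
qed

definition KK where "KK = kernelL n CC L"

lemma KK_iff: "k \<in> KK \<longleftrightarrow> k \<in> CC \<and> (\<forall>b\<in>CC. hform k b = 0)"
  by (simp add: KK_def kernelL_def hform_def)

lemma hform_kernel_left: "k \<in> KK \<Longrightarrow> x \<in> CC \<Longrightarrow> hform k x = 0" by (simp add: KK_iff)
lemma hform_kernel_right: "k \<in> KK \<Longrightarrow> x \<in> CC \<Longrightarrow> hform x k = 0"
  using hform_hermitian[of x k] by (simp add: KK_iff)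

lemma KK_subspace: "mpvec.subspace KK"
  unfolding mpvec.subspace_def
proof (intro conjI ballI allI)
  show "0 \<in> KK" unfolding KK_iff using C_subspace mpvec.subspace_0
    by (auto simp: hform_def mpmult_zero_right lin_on_zero[OF lin mpvec.subspace_0[OF Ak_subspace]])
next
  fix x y assume "x \<in> KK" "y \<in> KK"
  then show "x + y \<in> KK" unfolding KK_iff using C_add hform_add_left by auto
next
  fix c x assume "x \<in> KK"
  then show "mpscale c x \<in> KK" by (auto simp: KK_iff C_scale hform_scale_left)
qed

lemma flat_decomp: "c \<in> CC \<Longrightarrow> \<exists>b\<in>BB. c - b \<in> KK"
  using flat unfolding flat_ext_def mpadd_eq KK_def by (metis add_diff_cancel_left')

definition flat_rep where "flat_rep c = (SOME b. b \<in> BB \<and> c - b \<in> KK)"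

lemma flat_rep: assumes c: "c \<in> CC" shows "flat_rep c \<in> BB \<and> c - flat_rep c \<in> KK"
proof -
  have "\<exists>b. b \<in> BB \<and> c - b \<in> KK" using flat_decomp[OF c] by blast
  then show ?thesis unfolding flat_rep_def by (rule someI_ex)
qed

text \<open>Multiplication by \<open>x\<^sub>l\<close> followed by reduction into \<open>\<B>\<close> modulo the kernel, fixed on the
  unit basis so that the operator is linear everywhere.\<close>

definition shift_op :: "nat \<Rightarrow> mpmat \<Rightarrow> mpmat" where
  "shift_op l p = (\<Sum>(\<alpha>,i,j)\<in>mp_support n d m. mpscale (p \<alpha> i j) (flat_rep (mpshift l (mpunit \<alpha> i j))))"

lemma shift_op_add: "shift_op l (a + b) = shift_op l a + shift_op l b"
  unfolding shift_op_def by (simp add: sum.distrib[symmetric] case_prod_beta mpvec.scale_left_distrib)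
lemma shift_op_scale: "shift_op l (mpscale s a) = mpscale s (shift_op l a)"
  unfolding shift_op_def by (simp add: mpvec.scale_sum_right case_prod_beta) (simp add: mpscale_def)

lemma mpshift_mpunit_C: "l < d \<Longrightarrow> (\<alpha>, i, j) \<in> mp_support n d m \<Longrightarrow> mpshift l (mpunit \<alpha> i j) \<in> CC"
  using mpshift_Ak[OF _ mpunit_Ak] by (simp add: mp_support_def)

lemma shift_op_B: "l < d \<Longrightarrow> shift_op l p \<in> BB"
  unfolding shift_op_def
  by (intro mpvec.subspace_sum[OF Ak_subspace]) (auto intro!: mpvec.subspace_scale[OF Ak_subspace] flat_rep[THEN conjunct1] mpshift_mpunit_C)

lemma shift_op_kernel: assumes l: "l < d" and b: "b \<in> BB" shows "shift_op l b - mpshift l b \<in> KK"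
proof -
  have "mpshift l b = (\<Sum>(\<alpha>,i,j)\<in>mp_support n d m. mpscale (b \<alpha> i j) (mpshift l (mpunit \<alpha> i j)))"
    by (subst Ak_unit_expansion[OF b]) (simp add: mpshift_sum case_prod_beta mpshift_scale)
  then have "shift_op l b - mpshift l b = (\<Sum>(\<alpha>,i,j)\<in>mp_support n d m.
      mpscale (b \<alpha> i j) (flat_rep (mpshift l (mpunit \<alpha> i j)) - mpshift l (mpunit \<alpha> i j)))"
    unfolding shift_op_def
    by (simp add: sum_subtractf[symmetric] case_prod_beta mpvec.scale_right_diff_distrib)
  also have "\<dots> \<in> KK"
  proof (intro mpvec.subspace_sum[OF KK_subspace], clarify)
    fix \<alpha> i j assume s: "(\<alpha>, i, j) \<in> mp_support n d m"
    let ?u = "mpshift l (mpunit \<alpha> i j)"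
    have "?u - flat_rep ?u \<in> KK" using flat_rep[OF mpshift_mpunit_C[OF l s]] by simp
    then have "flat_rep ?u - ?u \<in> KK" using mpvec.subspace_neg[OF KK_subspace] by fastforce
    then show "mpscale (b \<alpha> i j) (flat_rep ?u - ?u) \<in> KK" by (rule mpvec.subspace_scale[OF KK_subspace])
  qed
  finally show ?thesis .
qed

lemma mpshift_symmetric: assumes l: "l < d" and a: "a \<in> BB" and b: "b \<in> BB"
  shows "hform (mpshift l a) b = hform a (mpshift l b)"
proof -
  have "hform (mpshift l a) b = L (mpshift l (mpmult n (mpstar b) a))"
    unfolding hform_def using mpmult_mpshift_right[OF mpstar_Ak[OF b] a l] by simp
  moreover have "hform a (mpshift l b) = L (mpshift l (mpmult n (mpstar b) a))"
    unfolding hform_def mpstar_mpshift using mpmult_mpshift_left[OF mpstar_Ak[OF b] a l] by simp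
  ultimately show ?thesis by simp
qed

lemma hform_kernel_congr_left: assumes x: "x \<in> CC" and y: "y \<in> CC" and k: "y - x \<in> KK" and c: "c \<in> CC"
  shows "hform y c = hform x c"
proof -
  have "y = x + (y - x)" by simp
  then have "hform y c = hform x c + hform (y - x) c" using hform_add_left[OF x C_diff[OF y x] c] by metis
  then show ?thesis using hform_kernel_left[OF k c] by simp
qed

lemma hform_kernel_congr_right: assumes x: "x \<in> CC" and y: "y \<in> CC" and k: "y - x \<in> KK" and c: "c \<in> CC"
  shows "hform c y = hform c x"
proof -
  have "y = x + (y - x)" by simp
  then have "hform c y = hform c x + hform c (y - x)" using hform_add_right[OF x C_diff[OF y x] c] by metis
  then show ?thesis using hform_kernel_right[OF k c] by simp
qed

lemma mpshift_C: "l < d \<Longrightarrow> a \<in> BB \<Longrightarrow> mpshift l a \<in> CC"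
  using mpshift_Ak by blast

lemma shift_op_symmetric: assumes l: "l < d" and a: "a \<in> BB" and b: "b \<in> BB"
  shows "hform (shift_op l a) b = hform a (shift_op l b)"
proof -
  have "hform (shift_op l a) b = hform (mpshift l a) b"
    using hform_kernel_congr_left[OF mpshift_C[OF l a] B_in_C[OF shift_op_B[OF l]] shift_op_kernel[OF l a] B_in_C[OF b]] .
  also have "\<dots> = hform a (mpshift l b)" by (rule mpshift_symmetric[OF l a b])
  also have "\<dots> = hform a (shift_op l b)"
    using hform_kernel_congr_right[OF mpshift_C[OF l b] B_in_C[OF shift_op_B[OF l]] shift_op_kernel[OF l b] B_in_C[OF a]] by simp
  finally show ?thesis .
qed

lemma hform_shift_op_twice: assumes l: "l < d" and k: "k < d" and a: "a \<in> BB" and b: "b \<in> BB"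
  shows "hform (shift_op l (shift_op k a)) b = L (mpshift l (mpshift k (mpmult n (mpstar b) a)))"
proof -
  have Tka: "shift_op k a \<in> BB" by (rule shift_op_B[OF k])
  have "hform (shift_op l (shift_op k a)) b = hform (mpshift l (shift_op k a)) b"
    using hform_kernel_congr_left[OF mpshift_C[OF l Tka] B_in_C[OF shift_op_B[OF l]] shift_op_kernel[OF l Tka] B_in_C[OF b]] .
  also have "\<dots> = hform (shift_op k a) (mpshift l b)" by (rule mpshift_symmetric[OF l Tka b])
  also have "\<dots> = hform (mpshift k a) (mpshift l b)"
    using hform_kernel_congr_left[OF mpshift_C[OF k a] B_in_C[OF Tka] shift_op_kernel[OF k a] mpshift_C[OF l b]] .
  also have "\<dots> = L (mpmult n (mpshift l (mpstar b)) (mpshift k a))" by (simp add: hform_def mpstar_mpshift)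
  also have "\<dots> = L (mpshift l (mpmult n (mpstar b) (mpshift k a)))"
    using mpmult_mpshift_left[OF mpstar_Ak[OF b] mpshift_Ak[OF k a] l] by simp
  also have "\<dots> = L (mpshift l (mpshift k (mpmult n (mpstar b) a)))"
    using mpmult_mpshift_right[OF mpstar_Ak[OF b] a k] by simp
  finally show ?thesis .
qed

lemma shift_op_commuting_symmetric: "commuting_symmetric_operators mpscale BB ((\<lambda>(\<alpha>,i,j). mpunit \<alpha> i j) ` mp_support n d m) hform shift_op d"
proof (unfold_locales)
  show "mpvec.subspace BB" by (rule Ak_subspace)
  show "finite ((\<lambda>(\<alpha>,i,j). mpunit \<alpha> i j) ` mp_support n d m)" by (simp add: finite_mp_support)
  show "BB \<subseteq> mpvec.span ((\<lambda>(\<alpha>,i,j). mpunit \<alpha> i j) ` mp_support n d m)" by (rule Ak_span_units)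
  show "\<And>a b c. a \<in> BB \<Longrightarrow> b \<in> BB \<Longrightarrow> c \<in> BB \<Longrightarrow> hform (a + b) c = hform a c + hform b c"
    using hform_add_left B_in_C by blast
  show "\<And>a c s. a \<in> BB \<Longrightarrow> c \<in> BB \<Longrightarrow> hform (mpscale s a) c = s * hform a c"
    using hform_scale_left B_in_C by blast
  show "\<And>a b. a \<in> BB \<Longrightarrow> b \<in> BB \<Longrightarrow> hform a b = cnj (hform b a)"
    using hform_hermitian B_in_C by blast
  show "\<And>a. a \<in> BB \<Longrightarrow> 0 \<le> Re (hform a a)" using hform_self_nonneg B_in_C by blast
  show "\<And>l a b. shift_op l (a + b) = shift_op l a + shift_op l b" by (rule shift_op_add)
  show "\<And>l s a. shift_op l (mpscale s a) = mpscale s (shift_op l a)" by (rule shift_op_scale)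
  show "\<And>l a. l < d \<Longrightarrow> a \<in> BB \<Longrightarrow> shift_op l a \<in> BB" using shift_op_B by blast
  show "\<And>l a b. l < d \<Longrightarrow> a \<in> BB \<Longrightarrow> b \<in> BB \<Longrightarrow>
      hform (shift_op l a) b = hform a (shift_op l b)"
    by (rule shift_op_symmetric)
  show "\<And>l k a b. l < d \<Longrightarrow> k < d \<Longrightarrow> a \<in> BB \<Longrightarrow> b \<in> BB \<Longrightarrow>
      hform (shift_op l (shift_op k a)) b = hform (shift_op k (shift_op l a)) b"
    by (simp add: hform_shift_op_twice mpshift_commute)
qed

lemma hform_parseval:
  assumes eB: "\<forall>i<r. e i \<in> BB"
    and pars: "\<forall>v\<in>BB. \<forall>w\<in>BB. hform v w = (\<Sum>i<r. hform v (e i) * hform (e i) w)"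
    and c: "c \<in> CC" and c': "c' \<in> CC"
  shows "hform c c' = (\<Sum>i<r. hform c (e i) * hform (e i) c')"
proof -
  obtain b where b: "b \<in> BB" "c - b \<in> KK" using flat_decomp[OF c] by blast
  obtain b' where b': "b' \<in> BB" "c' - b' \<in> KK" using flat_decomp[OF c'] by blast
  have eC: "i < r \<Longrightarrow> e i \<in> CC" for i using eB B_in_C by blast
  have "hform c c' = hform b c'" using hform_kernel_congr_left[OF B_in_C[OF b(1)] c b(2) c'] .
  also have "\<dots> = hform b b'" using hform_kernel_congr_right[OF B_in_C[OF b'(1)] c' b'(2) B_in_C[OF b(1)]] .
  also have "\<dots> = (\<Sum>i<r. hform b (e i) * hform (e i) b')" using pars b(1) b'(1) by blast
  also have "\<dots> = (\<Sum>i<r. hform c (e i) * hform (e i) c')"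
  proof (rule sum.cong)
    fix i assume "i \<in> {..<r}"
    then have i: "e i \<in> CC" using eC by simp
    show "hform b (e i) * hform (e i) b' = hform c (e i) * hform (e i) c'"
      using hform_kernel_congr_left[OF B_in_C[OF b(1)] c b(2) i]
        hform_kernel_congr_right[OF B_in_C[OF b'(1)] c' b'(2) i]
      by simp
  qed simp
  finally show ?thesis .
qed

lemma hform_mpshift_eigen:
  assumes e: "e \<in> BB"
    and eig: "\<And>l v. l < d \<Longrightarrow> v \<in> BB \<Longrightarrow> hform v (shift_op l e) = of_real (t l) * hform v e"
    and c: "c \<in> CC" and l: "l < d"
  shows "hform c (mpshift l e) = of_real (t l) * hform c e"
proof -
  obtain b where b: "b \<in> BB" "c - b \<in> KK" using flat_decomp[OF c] by blast
  have "hform c (mpshift l e) = hform c (shift_op l e)"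
    using hform_kernel_congr_right[OF mpshift_C[OF l e] B_in_C[OF shift_op_B[OF l]] shift_op_kernel[OF l e] c]
    by simp
  also have "\<dots> = hform b (shift_op l e)"
    using hform_kernel_congr_left[OF B_in_C[OF b(1)] c b(2) B_in_C[OF shift_op_B[OF l]]] .
  also have "\<dots> = of_real (t l) * hform b e" using eig l b(1) by blast
  also have "\<dots> = of_real (t l) * hform c e"
    using hform_kernel_congr_left[OF B_in_C[OF b(1)] c b(2) B_in_C[OF e]] by simp
  finally show ?thesis .
qed

text \<open>Degree \<open>m + 1\<close> is reached because one factor \<open>x\<^sub>l\<close> can still be moved from a
  degree-\<open>m\<close> unit onto the eigenvector.\<close>

lemma hform_mpunit_eigen:
  assumes e: "e \<in> BB"
    and eig: "\<And>l v. l < d \<Longrightarrow> v \<in> BB \<Longrightarrow> hform v (shift_op l e) = of_real (t l) * hform v e"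
    and k: "k < n" and \<gamma>: "\<gamma> \<in> multi_idx d K" and K: "K \<le> Suc m"
  shows "hform (mpunit \<gamma> 0 k) e = (\<Prod>l<d. complex_of_real (t l) ^ \<gamma> l) * hform (mpunit (\<lambda>_. 0) 0 k) e"
  using \<gamma> K
proof (induction K arbitrary: \<gamma>)
  case 0
  then show ?case by (simp add: multi_idx_0)
next
  case (Suc K)
  from multi_idx_Suc_cases[OF Suc.prems(1)] show ?case
  proof (elim disjE exE bexE conjE)
    assume "\<gamma> \<in> multi_idx d K"
    then show ?case using Suc by simp
  next
    fix l \<gamma>' assume l: "l < d" and \<gamma>': "\<gamma>' \<in> multi_idx d K" and \<gamma>: "\<gamma> = \<gamma>'(l := Suc (\<gamma>' l))"
    have unit_B: "mpunit \<gamma>' 0 k \<in> BB"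
      using \<gamma>' Suc.prems(2) k by (intro mpunit_Ak) (auto simp: multi_idx_def)
    have "hform (mpunit \<gamma> 0 k) e = hform (mpshift l (mpunit \<gamma>' 0 k)) e"
      by (simp add: \<gamma> mpshift_mpunit)
    also have "\<dots> = hform (mpunit \<gamma>' 0 k) (mpshift l e)" by (rule mpshift_symmetric[OF l unit_B e])
    also have "\<dots> = of_real (t l) * hform (mpunit \<gamma>' 0 k) e"
      by (rule hform_mpshift_eigen[OF e eig B_in_C[OF unit_B] l])
    also have "\<dots> = of_real (t l) * ((\<Prod>l<d. complex_of_real (t l) ^ \<gamma>' l) * hform (mpunit (\<lambda>_. 0) 0 k) e)"
      using Suc \<gamma>' by simp
    also have "\<dots> = (\<Prod>l<d. complex_of_real (t l) ^ \<gamma> l) * hform (mpunit (\<lambda>_. 0) 0 k) e"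
      using monomial_incr[OF l, of "\<lambda>x. complex_of_real (t x)" \<gamma>'] by (simp add: \<gamma>)
    finally show ?case .
  qed
qed

lemma L_mpunit_eigen_sum:
  assumes onf: "commuting_symmetric_operators.orthonormal_eigen BB hform shift_op d r e t"
    and pars: "\<forall>v\<in>BB. \<forall>w\<in>BB. hform v w = (\<Sum>i<r. hform v (e i) * hform (e i) w)"
    and \<alpha>: "\<alpha> \<in> multi_idx d (Suc (Suc (2*m)))" and j: "j < n" and k: "k < n"
  shows "L (mpunit \<alpha> j k) = (\<Sum>i<r. (\<Prod>l<d. complex_of_real (t i l) ^ \<alpha> l)
           * hform (mpunit (\<lambda>_. 0) 0 k) (e i) * cnj (hform (mpunit (\<lambda>_. 0) 0 j) (e i)))"
proof -
  have eB: "\<forall>i<r. e i \<in> BB"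
    and eig: "\<And>i l v. i < r \<Longrightarrow> l < d \<Longrightarrow> v \<in> BB \<Longrightarrow> hform v (shift_op l (e i)) = of_real (t i l) * hform v (e i)"
    using onf
    unfolding commuting_symmetric_operators.orthonormal_eigen_def[OF shift_op_commuting_symmetric]
      commuting_symmetric_operators.orthonormal_def[OF shift_op_commuting_symmetric]
    by auto
  define tp where "tp i \<alpha> = (\<Prod>l<d. complex_of_real (t i l) ^ \<alpha> l)" for i \<alpha>
  have "\<alpha> \<in> multi_idx d (Suc m + Suc m)" using \<alpha> by (simp add: mult_2)
  then obtain \<beta> \<gamma> where \<beta>: "\<beta> \<in> multi_idx d (Suc m)" and \<gamma>: "\<gamma> \<in> multi_idx d (Suc m)"
    and \<alpha>_eq: "\<alpha> = (\<lambda>x. \<beta> x + \<gamma> x)"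
    using multi_idx_split by blast
  have n0: "0 < n" using j by simp
  have Eb: "mpunit \<beta> 0 j \<in> CC" by (rule mpunit_Ak[OF \<beta> n0 j])
  have Eg: "mpunit \<gamma> 0 k \<in> CC" by (rule mpunit_Ak[OF \<gamma> n0 k])
  have "mpmult n (mpunit \<beta> j 0) (mpunit \<gamma> 0 k) = mpunit \<alpha> j k"
    using mpmult_mpunits[OF \<beta> \<gamma> n0 k, where i=j and k=0] \<alpha>_eq by simp
  then have "L (mpunit \<alpha> j k) = hform (mpunit \<gamma> 0 k) (mpunit \<beta> 0 j)" by (simp add: hform_def mpstar_mpunit)
  also have "\<dots> = (\<Sum>i<r. hform (mpunit \<gamma> 0 k) (e i) * hform (e i) (mpunit \<beta> 0 j))"
    by (rule hform_parseval[OF eB pars Eg Eb])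
  also have "\<dots> = (\<Sum>i<r. tp i \<alpha> * hform (mpunit (\<lambda>_. 0) 0 k) (e i) * cnj (hform (mpunit (\<lambda>_. 0) 0 j) (e i)))"
  proof (rule sum.cong[OF refl])
    fix i assume "i \<in> {..<r}"
    then have i: "i < r" by simp
    have ei: "e i \<in> BB" using eB i by blast
    have eig_i: "\<And>l v. l < d \<Longrightarrow> v \<in> BB \<Longrightarrow> hform v (shift_op l (e i)) = of_real (t i l) * hform v (e i)"
      using eig[OF i] .
    have 1: "hform (mpunit \<gamma> 0 k) (e i) = tp i \<gamma> * hform (mpunit (\<lambda>_. 0) 0 k) (e i)"
      using hform_mpunit_eigen[OF ei eig_i k \<gamma> order_refl] by (simp add: tp_def)
    have 2: "hform (e i) (mpunit \<beta> 0 j) = cnj (tp i \<beta> * hform (mpunit (\<lambda>_. 0) 0 j) (e i))"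
      using hform_mpunit_eigen[OF ei eig_i j \<beta> order_refl] hform_hermitian[OF B_in_C[OF ei] Eb]
      by (simp add: tp_def)
    have 3: "cnj (tp i \<beta>) = tp i \<beta>" by (simp add: tp_def)
    have 4: "tp i \<gamma> * tp i \<beta> = tp i \<alpha>"
      using monomial_add[where f="\<lambda>l. complex_of_real (t i l)" and g=\<beta> and h=\<gamma> and d=d] \<alpha>_eq
      by (simp add: tp_def mult.commute)
    show "hform (mpunit \<gamma> 0 k) (e i) * hform (e i) (mpunit \<beta> 0 j)
        = tp i \<alpha> * hform (mpunit (\<lambda>_. 0) 0 k) (e i) * cnj (hform (mpunit (\<lambda>_. 0) 0 j) (e i))"
      unfolding 1 2 using 3 4 by (simp add: algebra_simps)
  qed
  finally show ?thesis by (simp add: tp_def)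
qed

lemma flat_ext_units_representation:
  "\<exists>(r::nat) (t::nat \<Rightarrow> nat \<Rightarrow> real) (u::nat \<Rightarrow> nat \<Rightarrow> complex).
     \<forall>\<alpha>\<in>multi_idx d (Suc (Suc (2*m))). \<forall>j<n. \<forall>k<n.
       L (mpunit \<alpha> j k) = (\<Sum>i<r. (\<Prod>l<d. complex_of_real (t i l) ^ \<alpha> l) * u k i * cnj (u j i))"
proof -
  obtain r e t where onf: "commuting_symmetric_operators.orthonormal_eigen BB hform shift_op d r e t"
    and pars: "\<forall>v\<in>BB. \<forall>w\<in>BB. hform v w = (\<Sum>i<r. hform v (e i) * hform (e i) w)"
    using commuting_symmetric_operators.orthonormal_eigen_parseval_exists[OF shift_op_commuting_symmetric]
    by blast
  show ?thesis
    using L_mpunit_eigen_sum[OF onf pars]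
    by (intro exI[of _ r] exI[of _ t] exI[of _ "\<lambda>k i. hform (mpunit (\<lambda>_. 0) 0 k) (e i)"]) blast
qed

end

theorem proposition4p3:
  fixes n d m :: nat and L :: "mpmat \<Rightarrow> complex"
  assumes "lin_on (Ak n d (2*m+2)) L"
    and "positive_on n (Ak n d (m+1)) L"
    and "flat_ext n (Ak n d m) (Ak n d (m+1)) L"
  shows "\<exists>(r::nat) (t::nat \<Rightarrow> nat \<Rightarrow> real) (u::nat \<Rightarrow> nat \<Rightarrow> complex).
     \<forall>p\<in>Ak n d (2*m+2).
       L p = (\<Sum>j<n. \<Sum>k<n. \<Sum>i<r. mpeval d (2*m+2) p j k (t i) * u k i * cnj (u j i))"
proof -
  have m: "2*m+2 = Suc (Suc (2*m))" "m+1 = Suc m" by simp_all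
  obtain r :: nat and t u where units: "\<forall>\<alpha>\<in>multi_idx d (2*m+2). \<forall>j<n. \<forall>k<n.
      L (mpunit \<alpha> j k) = (\<Sum>i<r. (\<Prod>l<d. complex_of_real (t i l) ^ \<alpha> l) * u k i * cnj (u j i))"
    using flat_ext_units_representation[OF assms[unfolded m]] unfolding m by blast
  show ?thesis
    using lin_on_Ak_eval_representation[OF assms(1)] units by blast
qed

end
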